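(* Let $w=(i,\epsilon)\in\mathcal W_0(d)$ and $\tau=\tau(w)$. Then $d$ is even and: (1) $\mathrm{NF}(w)=(x_{j(1)},\dots,x_{j(d/2)},x_{j(d/2)}^{-1},\dots,x_{j(1)}^{-1})$ for some $j:[d/2]\to\mathbb N_0$ with $j(l)+p-1\ge j(l+1)$ for $1\le l\le d/2-1$, and $-d(p-1)/2\le j(l)-i(\tau^{-1}(l))\le d(p-1)/2$ for all $l\in[d/2]$; (2) for every $k\in[d/2]$, $|i(\tau^{-1}(k))-i(\tau^{-1}(d-k+1))|\le d(p-1)$.
   Context: Fix an integer $p\ge2$; $F_p=\langle x_0,x_1,\dots\mid x_nx_k=x_kx_{n+p-1}\ \forall k<n\rangle$ with identity $e$. For $d\in\mathbb N$ and $[d]=\{1,\dots,d\}$, a word of length $d$ is a tuple $w=(x_{i(1)}^{\epsilon(1)},\dots,x_{i(d)}^{\epsilon(d)})$ with $i:[d]\to\mathbb N_0$, $\epsilon:[d]\to\{1,-1\}$, written $w=(i,\epsilon)$; $\mathrm{eval}(w)=x_{i(1)}^{\epsilon(1)}\cdots x_{i(d)}^{\epsilon(d)}$; $\mathcal W(d)$ is the set of words of length $d$ and $\mathcal W_0(d)=\{w\in\mathcal W(d):\mathrm{eval}(w)=e\}$. Rewriting relations: ($\rightsquigarrow$) a consecutive pair $(x_a^{-1},x_b)$ is replaced by $(x_b,x_{a+p-1}^{-1})$ if $a>b$, by $(x_{b+p-1},x_a^{-1})$ if $a<b$, by $(x_b,x_a^{-1})$ if $a=b$; ($\rightarrowtail$,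 on $\rightsquigarrow$-irreducible words) $(x_a,x_b)$ with $b-p+1>a$ is replaced by $(x_{b-p+1},x_a)$, and $(x_a^{-1},x_b^{-1})$ with $a-p+1>b$ by $(x_b^{-1},x_{a-p+1}^{-1})$. The normal form $\mathrm{NF}(w)$ is obtained by applying $\rightsquigarrow$ until irreducible and then $\rightarrowtail$ until irreducible (well defined). Each step swaps two adjacent letters; $\tau(w)\in S_d$ is defined by letting $\tau(w)(l)$ be the position in $\mathrm{NF}(w)$ of the letter originating from the $l$-th letter of $w$. *)

theory Defs
  imports Main
begin

(* A letter x_a^e of F_p is a pair (a, e) with a :: nat and e :: int in {1, -1}. *)
type_synonym letter = "nat \<times> int"

(* Equality in the presented group
   F_p = < x_0, x_1, ... | x_n x_k = x_k x_(n+p-1) for all k < n >: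
   the congruence on words generated by free cancellation and the defining relations. *)
inductive fp_equiv :: "nat \<Rightarrow> letter list \<Rightarrow> letter list \<Rightarrow> bool" for p where
  fp_refl: "fp_equiv p u u"
| fp_sym: "fp_equiv p u v \<Longrightarrow> fp_equiv p v u"
| fp_trans: "fp_equiv p u v \<Longrightarrow> fp_equiv p v w \<Longrightarrow> fp_equiv p u w"
| fp_cancel: "e \<in> {1, -1} \<Longrightarrow> fp_equiv p (u @ [(a, e), (a, - e)] @ v) (u @ v)"
| fp_rel: "k < n \<Longrightarrow>
    fp_equiv p (u @ [(n, 1), (k, 1)] @ v) (u @ [(k, 1), (n + p - 1, 1)] @ v)"

definition word :: "nat \<Rightarrow> (nat \<Rightarrow> nat) \<Rightarrow> (nat \<Rightarrow> int) \<Rightarrow> letter list" where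
  "word d i eps = map (\<lambda>l. (i l, eps l)) [1..<d+1]"

definition in_W0 :: "nat \<Rightarrow> nat \<Rightarrow> (nat \<Rightarrow> nat) \<Rightarrow> (nat \<Rightarrow> int) \<Rightarrow> bool" where
  "in_W0 p d i eps \<longleftrightarrow> (\<forall>l\<in>{1..d}. eps l \<in> {1, -1}) \<and> fp_equiv p (word d i eps) []"

(* Tracked letters (a, e, r): letter x_a^e originating from position o of the original word *)
type_synonym tletter = "nat \<times> int \<times> nat"

definition tracked_word :: "nat \<Rightarrow> (nat \<Rightarrow> nat) \<Rightarrow> (nat \<Rightarrow> int) \<Rightarrow> tletter list" where
  "tracked_word d i eps = map (\<lambda>l. (i l, eps l, l)) [1..<d+1]"

definition strip :: "tletter list \<Rightarrow> letter list" where
  "strip u = map (\<lambda>(a, e, r). (a, e)) u"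

inductive rs_step :: "nat \<Rightarrow> tletter list \<Rightarrow> tletter list \<Rightarrow> bool" for p where
  rs_gt: "a > b \<Longrightarrow> rs_step p (xs @ [(a, -1, r1), (b, 1, r2)] @ ys)
                              (xs @ [(b, 1, r2), (a + p - 1, -1, r1)] @ ys)"
| rs_lt: "a < b \<Longrightarrow> rs_step p (xs @ [(a, -1, r1), (b, 1, r2)] @ ys)
                              (xs @ [(b + p - 1, 1, r2), (a, -1, r1)] @ ys)"
| rs_eq: "a = b \<Longrightarrow> rs_step p (xs @ [(a, -1, r1), (b, 1, r2)] @ ys)
                              (xs @ [(b, 1, r2), (a, -1, r1)] @ ys)"

definition rs_irreducible :: "nat \<Rightarrow> tletter list \<Rightarrow> bool" where
  "rs_irreducible p u \<longleftrightarrow> \<not> (\<exists>v. rs_step p u v)"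

inductive ra_step :: "nat \<Rightarrow> tletter list \<Rightarrow> tletter list \<Rightarrow> bool" for p where
  ra_pos: "rs_irreducible p (xs @ [(a, 1, r1), (b, 1, r2)] @ ys) \<Longrightarrow>
           int b - int p + 1 > int a \<Longrightarrow>
           ra_step p (xs @ [(a, 1, r1), (b, 1, r2)] @ ys)
                     (xs @ [(b - p + 1, 1, r2), (a, 1, r1)] @ ys)"
| ra_neg: "rs_irreducible p (xs @ [(a, -1, r1), (b, -1, r2)] @ ys) \<Longrightarrow>
           int a - int p + 1 > int b \<Longrightarrow>
           ra_step p (xs @ [(a, -1, r1), (b, -1, r2)] @ ys)
                     (xs @ [(b, -1, r2), (a - p + 1, -1, r1)] @ ys)"

definition ra_irreducible :: "nat \<Rightarrow> tletter list \<Rightarrow> bool" where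
  "ra_irreducible p u \<longleftrightarrow> \<not> (\<exists>v. ra_step p u v)"

definition NF_tracked :: "nat \<Rightarrow> tletter list \<Rightarrow> tletter list \<Rightarrow> bool" where
  "NF_tracked p w v \<longleftrightarrow> (\<exists>u. (rs_step p)\<^sup>*\<^sup>* w u \<and> rs_irreducible p u \<and>
                              (ra_step p)\<^sup>*\<^sup>* u v \<and> ra_irreducible p v)"

(* \<tau>^{-1}(k): the original position of the letter at position k (1-based) of the tracked NF *)
definition tau_inv :: "tletter list \<Rightarrow> nat \<Rightarrow> nat" where
  "tau_inv v k = snd (snd (v ! (k - 1)))"

end

theory Submission
  imports Defs
begin

(* F_p acts on sequences of base-p digits: x_r with r < p - 1 rewrites the first one or two
   digits, and x_(q(p-1)+r) acts as x_r behind a prefix of q digits p - 1. Both rewriting systems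
   preserve this action, and a word irreducible for the first one is a positive word followed by a
   negative one. For a trivial word the positive part P and the reversed negative part Q
   therefore act alike. If P and Q are irreducible for the second system, the least letter
   and its multiplicity are read off the action on suitable test sequences, and moving that letter
   to the front by the relations gives P = Q by induction. (That d is even already follows from
   the exponent sum.)
   For the index bounds: a step of the first system raises the two swapped indices by at most
   p - 1, and a letter is swapped past at most d/2 letters of opposite sign. A step of the second
   system lowers an index by p - 1, but the index a letter attains when it is pushed to the end of
   its half is invariant, which bounds the total decrease by (p - 1)(d/2 - 1). *)

definition exp_sum :: "letter list \<Rightarrow> int" where
  "exp_sum w = sum_list (map snd w)"

lemma fp_equiv_exp_sum: "fp_equiv p u v \<Longrightarrow> exp_sum u = exp_sum v"
  by (induction rule: fp_equiv.induct) (simp_all add: exp_sum_def)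

lemma even_length_iff_even_sum_list:
  "\<forall>x\<in>set L. x \<in> {1, -1 :: int} \<Longrightarrow> even (length L) \<longleftrightarrow> even (sum_list L)"
  by (induction L) auto

lemma in_W0_even_length:
  assumes "in_W0 p d i eps"
  shows "even d"
proof -
  have eps: "\<forall>l\<in>{1..d}. eps l \<in> {1, -1}" and trivial: "fp_equiv p (word d i eps) []"
    using assms unfolding in_W0_def by auto
  have "sum_list (map eps [1..<d+1]) = 0"
    using fp_equiv_exp_sum[OF trivial] by (simp add: exp_sum_def word_def o_def)
  moreover have "\<forall>x\<in>set (map eps [1..<d+1]). x \<in> {1, -1}"
    using eps by auto
  ultimately have "even (length (map eps [1..<d+1]))"
    using even_length_iff_even_sum_list by (metis even_zero)
  then show ?thesis by (simp only: length_map length_upt diff_add_inverse2)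
qed

section \<open>An action of F_p on digit sequences\<close>

definition digit_seqs :: "nat \<Rightarrow> (nat \<Rightarrow> nat) set" where
  "digit_seqs p = {s. \<forall>n. s n < p}"

(* The action of x_r, r < p - 1: sequences starting with a digit below r are fixed, those starting
   above r get a digit p - 1 prepended, and a leading pair (r, c) becomes the digit r + c if
   r + c < p - 1 and the pair (p - 1, r + c - (p - 1)) otherwise. *)
definition gen_low :: "nat \<Rightarrow> nat \<Rightarrow> (nat \<Rightarrow> nat) \<Rightarrow> (nat \<Rightarrow> nat)" where
  "gen_low p r s = (if s 0 < r then s
     else if s 0 = r then
       (if r + min (s 1) (p - 1) < p - 1 then case_nat (r + min (s 1) (p - 1)) (\<lambda>n. s (Suc (Suc n)))
        else case_nat (p - 1) (case_nat (r + min (s 1) (p - 1) - (p - 1)) (\<lambda>n. s (Suc (Suc n)))))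
     else case_nat (p - 1) s)"

definition gen_low_inv :: "nat \<Rightarrow> nat \<Rightarrow> (nat \<Rightarrow> nat) \<Rightarrow> (nat \<Rightarrow> nat)" where
  "gen_low_inv p r s = (if s 0 < r then s
     else if s 0 < p - 1 then case_nat r (case_nat (s 0 - r) (\<lambda>n. s (Suc n)))
     else if s 1 \<le> r then case_nat r (case_nat (s 1 + (p - 1) - r) (\<lambda>n. s (Suc (Suc n))))
     else (\<lambda>n. s (Suc n)))"

lemma gen_low_gen_low_inv:
  assumes "r < p - 1" "s \<in> digit_seqs p"
  shows "gen_low p r (gen_low_inv p r s) = s"
proof -
  have "s 0 < p" "s (Suc 0) < p" using assms(2) by (auto simp: digit_seqs_def)
  then show ?thesis unfolding gen_low_def gen_low_inv_def
    using assms(1) by (intro ext) (auto split: nat.splits)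
qed

lemma gen_low_inv_gen_low:
  assumes "r < p - 1" "s \<in> digit_seqs p"
  shows "gen_low_inv p r (gen_low p r s) = s"
proof -
  have "s 0 < p" "s (Suc 0) < p" using assms(2) by (auto simp: digit_seqs_def)
  then show ?thesis unfolding gen_low_def gen_low_inv_def
    using assms(1) by (intro ext) (auto split: nat.splits)
qed

lemma gen_low_digit_seqs: "r < p - 1 \<Longrightarrow> s \<in> digit_seqs p \<Longrightarrow> gen_low p r s \<in> digit_seqs p"
  unfolding digit_seqs_def gen_low_def by (auto split: nat.splits)

lemma gen_low_inv_digit_seqs: "r < p - 1 \<Longrightarrow> s \<in> digit_seqs p \<Longrightarrow> gen_low_inv p r s \<in> digit_seqs p"
  unfolding digit_seqs_def gen_low_inv_def by (auto split: nat.splits)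

(* x_(q(p-1)+r) acts as x_r behind q leading digits p - 1 and fixes every other sequence.
   The disjunct p < 2 only serves termination. *)
function gen_act :: "nat \<Rightarrow> nat \<Rightarrow> (nat \<Rightarrow> nat) \<Rightarrow> (nat \<Rightarrow> nat)" where
  "gen_act p n s = (if n < p - 1 \<or> p < 2 then gen_low p n s
     else if s 0 = p - 1 then case_nat (p - 1) (gen_act p (n - (p - 1)) (\<lambda>k. s (Suc k))) else s)"
  by auto
termination by (relation "measure (\<lambda>(p, n, s). n)") auto

function gen_inv_act :: "nat \<Rightarrow> nat \<Rightarrow> (nat \<Rightarrow> nat) \<Rightarrow> (nat \<Rightarrow> nat)" where
  "gen_inv_act p n s = (if n < p - 1 \<or> p < 2 then gen_low_inv p n s
     else if s 0 = p - 1 then case_nat (p - 1) (gen_inv_act p (n - (p - 1)) (\<lambda>k. s (Suc k))) else s)"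
  by auto
termination by (relation "measure (\<lambda>(p, n, s). n)") auto

declare gen_act.simps [simp del] gen_inv_act.simps [simp del]

lemma gen_act_rec: "p \<ge> 2 \<Longrightarrow> gen_act p n s = (if n < p - 1 then gen_low p n s
    else if s 0 = p - 1 then case_nat (p - 1) (gen_act p (n - (p - 1)) (\<lambda>k. s (Suc k))) else s)"
  by (subst gen_act.simps) simp

lemma gen_inv_act_rec: "p \<ge> 2 \<Longrightarrow> gen_inv_act p n s = (if n < p - 1 then gen_low_inv p n s
    else if s 0 = p - 1 then case_nat (p - 1) (gen_inv_act p (n - (p - 1)) (\<lambda>k. s (Suc k))) else s)"
  by (subst gen_inv_act.simps) simp

lemma gen_act_shifted: "p \<ge> 2 \<Longrightarrow> gen_act p (n + (p - 1)) s =
    (if s 0 = p - 1 then case_nat (p - 1) (gen_act p n (\<lambda>k. s (Suc k))) else s)"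
  by (subst gen_act_rec) auto

lemma gen_act_fixes_below:
  assumes "p \<ge> 2" "k < p - 1" "k < n" "s 0 \<le> k"
  shows "gen_act p n s = s"
  using assms by (subst gen_act_rec) (auto simp: gen_low_def)

lemma gen_act_keeps_above:
  assumes "p \<ge> 2" "k < p - 1" "k < n" "s 0 > k"
  shows "gen_act p n s 0 > k"
  using assms by (subst gen_act_rec) (auto simp: gen_low_def)

lemma gen_act_fixes_gen_low_pivot:
  assumes "p \<ge> 2" "k < p - 1" "k < n" "s 0 = k"
  shows "gen_act p (n + (p - 1)) (gen_low p k s) = gen_low p k s"
proof (cases "k + min (s 1) (p - 1) < p - 1")
  case True
  then have "gen_low p k s = case_nat (k + min (s 1) (p - 1)) (\<lambda>n. s (Suc (Suc n)))"
    using assms(4) unfolding gen_low_def by (simp only: if_True if_False less_irrefl refl)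
  then show ?thesis
    using True by (subst gen_act_shifted[OF assms(1)]) (auto simp: min_def split: if_splits)
next
  case False
  define c where "c = k + min (s 1) (p - 1) - (p - 1)"
  have "c \<le> k" unfolding c_def by linarith
  then have "gen_act p n (case_nat c (\<lambda>n. s (Suc (Suc n)))) = case_nat c (\<lambda>n. s (Suc (Suc n)))"
    using gen_act_fixes_below[OF assms(1-3)] by simp
  moreover have "gen_low p k s = case_nat (p - 1) (case_nat c (\<lambda>n. s (Suc (Suc n))))"
    using assms(4) False unfolding gen_low_def c_def by simp
  ultimately show ?thesis
    by (subst gen_act_shifted[OF assms(1)]) simp
qed

lemma gen_act_relation_low:
  assumes "p \<ge> 2" "k < p - 1" "k < n"
  shows "gen_act p k (gen_act p n s) = gen_act p (n + (p - 1)) (gen_act p k s)"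
proof -
  have low: "gen_act p k t = gen_low p k t" for t
    using assms(1,2) by (simp add: gen_act_rec)
  consider "s 0 < k" | "s 0 = k" | "s 0 > k" by linarith
  then show ?thesis
  proof cases
    case 1
    then have "gen_act p n s = s" "gen_low p k s = s" "gen_act p (n + (p - 1)) s = s"
      using gen_act_fixes_below[OF assms] assms(1,2) gen_act_shifted by (simp_all add: gen_low_def)
    then show ?thesis by (simp add: low)
  next
    case 2
    then show ?thesis
      using gen_act_fixes_below[OF assms] gen_act_fixes_gen_low_pivot[OF assms] by (simp add: low)
  next
    case 3
    have "gen_act p (n + (p - 1)) (case_nat (p - 1) s) = case_nat (p - 1) (gen_act p n s)"
      by (subst gen_act_shifted[OF assms(1)]) simp
    moreover have "gen_act p n s 0 > k"
      using gen_act_keeps_above[OF assms] 3 by simp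
    ultimately show ?thesis
      using 3 by (simp add: low gen_low_def)
  qed
qed

lemma gen_act_relation:
  assumes "p \<ge> 2" "k < n"
  shows "gen_act p k (gen_act p n s) = gen_act p (n + (p - 1)) (gen_act p k s)"
  using assms(2)
proof (induction k arbitrary: n s rule: less_induct)
  case (less k)
  show ?case
  proof (cases "k < p - 1")
    case True
    then show ?thesis by (rule gen_act_relation_low[OF assms(1) _ less.prems])
  next
    case False
    define k' n' where "k' = k - (p - 1)" and "n' = n - (p - 1)"
    have k: "k = k' + (p - 1)" and n: "n = n' + (p - 1)"
      using False less.prems unfolding k'_def n'_def by auto
    have IH: "gen_act p k' (gen_act p n' t) = gen_act p (n' + (p - 1)) (gen_act p k' t)" for t
      using less.IH[of k' n'] k n less.prems assms(1) by simp
    note shifted = gen_act_shifted[OF assms(1)]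
    show ?thesis
    proof (cases "s 0 = p - 1")
      case True
      let ?t = "\<lambda>i. s (Suc i)"
      have "gen_act p n s = case_nat (p - 1) (gen_act p n' ?t)"
        unfolding n by (subst shifted) (use True in simp)
      then have "gen_act p k (gen_act p n s) = case_nat (p - 1) (gen_act p k' (gen_act p n' ?t))"
        unfolding k by (subst shifted) simp
      moreover have "gen_act p k s = case_nat (p - 1) (gen_act p k' ?t)"
        unfolding k by (subst shifted) (use True in simp)
      then have "gen_act p (n + (p - 1)) (gen_act p k s) = case_nat (p - 1) (gen_act p n (gen_act p k' ?t))"
        by (subst shifted) simp
      ultimately show ?thesis by (simp add: IH n)
    next
      case False
      then show ?thesis unfolding k n shifted by simp
    qed
  qed
qed

lemma tl_digit_seqs: "s \<in> digit_seqs p \<Longrightarrow> (\<lambda>n. s (Suc n)) \<in> digit_seqs p"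
  by (simp add: digit_seqs_def)
lemma cons_digit_seqs: "s \<in> digit_seqs p \<Longrightarrow> c < p \<Longrightarrow> case_nat c s \<in> digit_seqs p"
  by (auto simp: digit_seqs_def split: nat.splits)
lemma case_nat_hd_tl: "s 0 = c \<Longrightarrow> case_nat c (\<lambda>n. s (Suc n)) = s"
  by (rule ext) (auto split: nat.splits)

lemma gen_act_digit_seqs:
  assumes "p \<ge> 2"
  shows "s \<in> digit_seqs p \<Longrightarrow> gen_act p n s \<in> digit_seqs p"
proof (induction n arbitrary: s rule: less_induct)
  case (less n)
  show ?case
  proof (cases "n < p - 1")
    case True then show ?thesis
      using less.prems assms gen_low_digit_seqs by (subst gen_act_rec) auto
  next
    case False
    have "gen_act p (n - (p - 1)) (\<lambda>n. s (Suc n)) \<in> digit_seqs p"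
      using less.IH[of "n - (p - 1)"] less.prems tl_digit_seqs False assms by simp
    then show ?thesis
      using less.prems assms False cons_digit_seqs[of _ p "p - 1"] by (subst gen_act_rec) auto
  qed
qed

lemma gen_inv_act_digit_seqs:
  assumes "p \<ge> 2"
  shows "s \<in> digit_seqs p \<Longrightarrow> gen_inv_act p n s \<in> digit_seqs p"
proof (induction n arbitrary: s rule: less_induct)
  case (less n)
  show ?case
  proof (cases "n < p - 1")
    case True then show ?thesis
      using less.prems assms gen_low_inv_digit_seqs by (subst gen_inv_act_rec) auto
  next
    case False
    have "gen_inv_act p (n - (p - 1)) (\<lambda>n. s (Suc n)) \<in> digit_seqs p"
      using less.IH[of "n - (p - 1)"] less.prems tl_digit_seqs False assms by simp
    then show ?thesis
      using less.prems assms False cons_digit_seqs[of _ p "p - 1"] by (subst gen_inv_act_rec) auto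
  qed
qed

lemma gen_inv_act_gen_act:
  assumes "p \<ge> 2"
  shows "s \<in> digit_seqs p \<Longrightarrow> gen_inv_act p n (gen_act p n s) = s"
proof (induction n arbitrary: s rule: less_induct)
  case (less n)
  show ?case
  proof (cases "n < p - 1")
    case True then show ?thesis using less.prems assms gen_low_inv_gen_low
      by (subst gen_act_rec, simp, subst gen_inv_act_rec, simp_all)
  next
    case False
    show ?thesis
    proof (cases "s 0 = p - 1")
      case True
      have X: "gen_act p n s = case_nat (p - 1) (gen_act p (n - (p - 1)) (\<lambda>n. s (Suc n)))"
        using True False assms by (subst gen_act_rec) auto
      have "gen_inv_act p n (gen_act p n s) = case_nat (p - 1) (gen_inv_act p (n - (p - 1)) (gen_act p (n - (p - 1)) (\<lambda>n. s (Suc n))))"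
        unfolding X using False assms by (subst gen_inv_act_rec) auto
      also have "\<dots> = case_nat (p - 1) (\<lambda>n. s (Suc n))"
        using less.IH[of "n - (p - 1)"] less.prems tl_digit_seqs False assms by simp
      also have "\<dots> = s" using case_nat_hd_tl[of s "p - 1"] True by simp
      finally show ?thesis .
    next
      case F2: False
      have X: "gen_act p n s = s" using F2 False assms by (subst gen_act_rec) auto
      show ?thesis unfolding X using F2 False assms by (subst gen_inv_act_rec) auto
    qed
  qed
qed

lemma gen_act_gen_inv_act:
  assumes "p \<ge> 2"
  shows "s \<in> digit_seqs p \<Longrightarrow> gen_act p n (gen_inv_act p n s) = s"
proof (induction n arbitrary: s rule: less_induct)
  case (less n)
  show ?case
  proof (cases "n < p - 1")
    case True then show ?thesis using less.prems assms gen_low_gen_low_inv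
      by (subst gen_inv_act_rec, simp, subst gen_act_rec, simp_all)
  next
    case False
    show ?thesis
    proof (cases "s 0 = p - 1")
      case True
      have X: "gen_inv_act p n s = case_nat (p - 1) (gen_inv_act p (n - (p - 1)) (\<lambda>n. s (Suc n)))"
        using True False assms by (subst gen_inv_act_rec) auto
      have "gen_act p n (gen_inv_act p n s) = case_nat (p - 1) (gen_act p (n - (p - 1)) (gen_inv_act p (n - (p - 1)) (\<lambda>n. s (Suc n))))"
        unfolding X using False assms by (subst gen_act_rec) auto
      also have "\<dots> = case_nat (p - 1) (\<lambda>n. s (Suc n))"
        using less.IH[of "n - (p - 1)"] less.prems tl_digit_seqs False assms by simp
      also have "\<dots> = s" using case_nat_hd_tl[of s "p - 1"] True by simp
      finally show ?thesis .
    next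
      case F2: False
      have X: "gen_inv_act p n s = s" using F2 False assms by (subst gen_inv_act_rec) auto
      show ?thesis unfolding X using F2 False assms by (subst gen_act_rec) auto
    qed
  qed
qed

fun word_act :: "nat \<Rightarrow> letter list \<Rightarrow> (nat \<Rightarrow> nat) \<Rightarrow> (nat \<Rightarrow> nat)" where
  "word_act p [] s = s"
| "word_act p (x # w) s = word_act p w (if snd x = 1 then gen_act p (fst x) s else gen_inv_act p (fst x) s)"

lemma word_act_append: "word_act p (xs @ ys) s = word_act p ys (word_act p xs s)"
  by (induction xs arbitrary: s) auto

lemma word_act_digit_seqs: "p \<ge> 2 \<Longrightarrow> s \<in> digit_seqs p \<Longrightarrow> word_act p w s \<in> digit_seqs p"
  by (induction w arbitrary: s) (auto simp: gen_act_digit_seqs gen_inv_act_digit_seqs)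

lemma fp_equiv_word_act:
  assumes "p \<ge> 2"
  shows "fp_equiv p u v \<Longrightarrow> \<forall>s\<in>digit_seqs p. word_act p u s = word_act p v s"
proof (induction rule: fp_equiv.induct)
  case (fp_cancel e u a v)
  show ?case
  proof
    fix s assume s: "s \<in> digit_seqs p"
    have s': "word_act p u s \<in> digit_seqs p" using word_act_digit_seqs[OF assms s] .
    have "word_act p [(a, e), (a, - e)] (word_act p u s) = word_act p u s"
      using fp_cancel gen_inv_act_gen_act[OF assms s'] gen_act_gen_inv_act[OF assms s'] by auto
    then show "word_act p (u @ [(a, e), (a, - e)] @ v) s = word_act p (u @ v) s"
      by (simp add: word_act_append)
  qed
next
  case (fp_rel k n u v)
  have e: "n + p - Suc 0 = n + (p - Suc 0)" using assms by simp
  show ?case using gen_act_relation[OF assms fp_rel] by (simp add: word_act_append e)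
qed auto

lemma word_act_rs_gt:
  assumes "p \<ge> 2" "b < a" "s \<in> digit_seqs p"
  shows "word_act p [(a, -1), (b, 1)] s = word_act p [(b, 1), (a + p - 1, -1)] s"
proof -
  define t where "t = gen_inv_act p a s"
  have t: "t \<in> digit_seqs p" "s = gen_act p a t"
    using gen_inv_act_digit_seqs[OF assms(1) assms(3)] gen_act_gen_inv_act[OF assms(1) assms(3)]
      unfolding t_def by auto
  have e: "a + p - 1 = a + (p - 1)" using assms by simp
  have "word_act p [(b, 1), (a + p - 1, -1)] s = gen_inv_act p (a + (p - 1)) (gen_act p b (gen_act p a t))"
    using t e by simp
  also have "\<dots> = gen_inv_act p (a + (p - 1)) (gen_act p (a + (p - 1)) (gen_act p b t))"
    using gen_act_relation[OF assms(1) assms(2)] by simp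
  also have "\<dots> = gen_act p b t"
    using gen_inv_act_gen_act[OF assms(1) gen_act_digit_seqs[OF assms(1) t(1)]] by simp
  finally show ?thesis using t_def by simp
qed

lemma word_act_rs_lt:
  assumes "p \<ge> 2" "a < b" "s \<in> digit_seqs p"
  shows "word_act p [(a, -1), (b, 1)] s = word_act p [(b + p - 1, 1), (a, -1)] s"
proof -
  define t where "t = gen_inv_act p a s"
  have t: "t \<in> digit_seqs p" "s = gen_act p a t"
    using gen_inv_act_digit_seqs[OF assms(1) assms(3)] gen_act_gen_inv_act[OF assms(1) assms(3)]
      unfolding t_def by auto
  have e: "b + p - 1 = b + (p - 1)" using assms by simp
  have "word_act p [(b + p - 1, 1), (a, -1)] s = gen_inv_act p a (gen_act p (b + (p - 1)) (gen_act p a t))"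
    using t e by simp
  also have "\<dots> = gen_inv_act p a (gen_act p a (gen_act p b t))"
    using gen_act_relation[OF assms(1) assms(2)] by simp
  also have "\<dots> = gen_act p b t"
    using gen_inv_act_gen_act[OF assms(1) gen_act_digit_seqs[OF assms(1) t(1)]] by simp
  finally show ?thesis using t_def by simp
qed

lemma word_act_rs_eq:
  assumes "p \<ge> 2" "s \<in> digit_seqs p"
  shows "word_act p [(a, -1), (a, 1)] s = word_act p [(a, 1), (a, -1)] s"
  using gen_inv_act_gen_act[OF assms] gen_act_gen_inv_act[OF assms] by simp

lemma word_act_ra_pos:
  assumes "p \<ge> 2" "int b - int p + 1 > int a"
  shows "word_act p [(a, 1), (b, 1)] s = word_act p [(b - p + 1, 1), (a, 1)] s"
proof -
  have lt: "a < b - p + 1" and e: "b - p + 1 + (p - 1) = b" using assms by auto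
  show ?thesis using gen_act_relation[OF assms(1) lt, of s] e by simp
qed

lemma word_act_ra_neg:
  assumes "p \<ge> 2" "int a - int p + 1 > int b" "s \<in> digit_seqs p"
  shows "word_act p [(a, -1), (b, -1)] s = word_act p [(b, -1), (a - p + 1, -1)] s"
proof -
  define n where "n = a - p + 1"
  have lt: "b < n" and e: "n + (p - 1) = a" using assms unfolding n_def by auto
  define z where "z = gen_inv_act p n (gen_inv_act p b s)"
  have zV: "z \<in> digit_seqs p" unfolding z_def
    using gen_inv_act_digit_seqs[OF assms(1)] assms(3) by blast
  have bV: "gen_inv_act p b s \<in> digit_seqs p"
    using gen_inv_act_digit_seqs[OF assms(1) assms(3)] .
  have "gen_act p b (gen_act p n z) = s" unfolding z_def
    using gen_act_gen_inv_act[OF assms(1) bV] gen_act_gen_inv_act[OF assms(1) assms(3)] by simp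
  then have "gen_act p a (gen_act p b z) = s" using gen_act_relation[OF assms(1) lt, of z] e by simp
  then have "gen_inv_act p a s = gen_act p b z"
    using gen_inv_act_gen_act[OF assms(1) gen_act_digit_seqs[OF assms(1) zV]] by metis
  then have "gen_inv_act p b (gen_inv_act p a s) = z"
    using gen_inv_act_gen_act[OF assms(1) zV] by simp
  then show ?thesis unfolding z_def n_def by simp
qed

lemma rs_step_word_act:
  assumes "p \<ge> 2" "rs_step p u v" "s \<in> digit_seqs p"
  shows "word_act p (strip u) s = word_act p (strip v) s"
  using assms(2)
proof cases
  case (rs_gt b a xs r1 r2 ys)
  have V: "word_act p (strip xs) s \<in> digit_seqs p"
    using word_act_digit_seqs[OF assms(1) assms(3)] .
  show ?thesis
    using word_act_rs_gt[OF assms(1) rs_gt(3) V] rs_gt by (simp add: strip_def word_act_append)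
next
  case (rs_lt a b xs r1 r2 ys)
  have V: "word_act p (strip xs) s \<in> digit_seqs p"
    using word_act_digit_seqs[OF assms(1) assms(3)] .
  show ?thesis
    using word_act_rs_lt[OF assms(1) rs_lt(3) V] rs_lt by (simp add: strip_def word_act_append)
next
  case (rs_eq a b xs r1 r2 ys)
  have V: "word_act p (strip xs) s \<in> digit_seqs p"
    using word_act_digit_seqs[OF assms(1) assms(3)] .
  show ?thesis
    using word_act_rs_eq[OF assms(1) V, of a] rs_eq by (simp add: strip_def word_act_append)
qed

lemma ra_step_word_act:
  assumes "p \<ge> 2" "ra_step p u v" "s \<in> digit_seqs p"
  shows "word_act p (strip u) s = word_act p (strip v) s"
  using assms(2)
proof cases
  case (ra_pos xs a r1 b r2 ys)
  show ?thesis
    using word_act_ra_pos[OF assms(1) ra_pos(4)] ra_pos by (simp add: strip_def word_act_append)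
next
  case (ra_neg xs a r1 b r2 ys)
  have V: "word_act p (strip xs) s \<in> digit_seqs p"
    using word_act_digit_seqs[OF assms(1) assms(3)] .
  show ?thesis
    using word_act_ra_neg[OF assms(1) ra_neg(4) V] ra_neg by (simp add: strip_def word_act_append)
qed

section \<open>Positive words are determined by their action\<close>

fun pos_act :: "nat \<Rightarrow> nat list \<Rightarrow> (nat \<Rightarrow> nat) \<Rightarrow> (nat \<Rightarrow> nat)" where
  "pos_act p [] s = s"
| "pos_act p (a # w) s = pos_act p w (gen_act p a s)"

fun neg_act :: "nat \<Rightarrow> nat list \<Rightarrow> (nat \<Rightarrow> nat) \<Rightarrow> (nat \<Rightarrow> nat)" where
  "neg_act p [] s = s"
| "neg_act p (a # w) s = neg_act p w (gen_inv_act p a s)"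

lemma pos_act_append: "pos_act p (xs @ ys) s = pos_act p ys (pos_act p xs s)"
  by (induction xs arbitrary: s) auto

lemma word_act_pos: "word_act p (map (\<lambda>a. (a, 1)) W) s = pos_act p W s"
  by (induction W arbitrary: s) auto
lemma word_act_neg: "word_act p (map (\<lambda>a. (a, -1)) W) s = neg_act p W s"
  by (induction W arbitrary: s) auto

lemma pos_act_digit_seqs: "p \<ge> 2 \<Longrightarrow> s \<in> digit_seqs p \<Longrightarrow> pos_act p W s \<in> digit_seqs p"
  by (induction W arbitrary: s) (auto simp: gen_act_digit_seqs)
lemma pos_act_neg_act_rev: "p \<ge> 2 \<Longrightarrow> s \<in> digit_seqs p \<Longrightarrow> pos_act p W (neg_act p (rev W) s) = s"
proof (induction W arbitrary: s rule: rev_induct)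
  case (snoc a W)
  have "pos_act p W (neg_act p (rev W) (gen_inv_act p a s)) = gen_inv_act p a s"
    using snoc gen_inv_act_digit_seqs by blast
  then show ?case using gen_act_gen_inv_act[OF snoc.prems] by (simp add: pos_act_append)
qed simp

lemma pos_act_extract_min:
  assumes "p \<ge> 2" "\<forall>a\<in>set A. mu < a"
  shows "pos_act p (A @ mu # B) s = pos_act p (map (\<lambda>a. a + (p - 1)) A @ B) (gen_act p mu s)"
  using assms(2)
proof (induction A arbitrary: s)
  case (Cons a A)
  have "pos_act p (a # A @ mu # B) s = pos_act p (map (\<lambda>a. a + (p - 1)) A @ B) (gen_act p mu (gen_act p a s))"
    using Cons by simp
  also have "gen_act p mu (gen_act p a s) = gen_act p (a + (p - 1)) (gen_act p mu s)"
    using gen_act_relation[OF assms(1)] Cons.prems by simp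
  finally show ?case by simp
qed simp

(* On the sequence (p-1)^q r b, the generator x_(q(p-1)+r) deletes a leading digit 0 of b and
   every later generator acts trivially; this detects the least letter of a positive word and its
   multiplicity. *)
definition test_seq :: "nat \<Rightarrow> nat \<Rightarrow> nat \<Rightarrow> (nat \<Rightarrow> nat) \<Rightarrow> (nat \<Rightarrow> nat)" where
  "test_seq p q r b = (\<lambda>n. if n < q then p - 1 else if n = q then r else b (n - Suc q))"

definition zero_prefix :: "nat \<Rightarrow> (nat \<Rightarrow> nat) \<Rightarrow> (nat \<Rightarrow> nat)" where
  "zero_prefix k b = (\<lambda>n. if n < k then 0 else b (n - k))"

lemma test_seq_0: "test_seq p 0 r b = case_nat r b"
  by (rule ext) (auto simp: test_seq_def split: nat.splits)
lemma test_seq_Suc: "test_seq p (Suc q) r b = case_nat (p - 1) (test_seq p q r b)"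
  by (rule ext) (auto simp: test_seq_def split: nat.splits)
lemma zero_prefix_0: "zero_prefix 0 b = b" by (simp add: zero_prefix_def)
lemma zero_prefix_Suc: "zero_prefix (Suc k) b = case_nat 0 (zero_prefix k b)"
  by (rule ext) (auto simp: zero_prefix_def split: nat.splits)

lemma gen_act_test_seq_fixed:
  assumes "p \<ge> 2" "r < p - 1"
  shows "q * (p - 1) + r < m \<Longrightarrow> gen_act p m (test_seq p q r b) = test_seq p q r b"
proof (induction q arbitrary: m)
  case 0
  then show ?case using assms unfolding test_seq_0 by (subst gen_act_rec) (auto simp: gen_low_def)
next
  case (Suc q)
  have m: "\<not> m < p - 1" "q * (p - 1) + r < m - (p - 1)" using Suc.prems by auto
  have "gen_act p m (test_seq p (Suc q) r b) = case_nat (p - 1) (gen_act p (m - (p - 1)) (test_seq p q r b))"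
    unfolding test_seq_Suc using assms m by (subst gen_act_rec) auto
  then show ?case using Suc.IH[OF m(2)] test_seq_Suc by simp
qed

lemma gen_act_test_seq_zero:
  assumes "p \<ge> 2" "r < p - 1"
  shows "gen_act p (q * (p - 1) + r) (test_seq p q r (case_nat 0 g)) = test_seq p q r g"
proof (induction q)
  case 0
  have "gen_low p r (case_nat r (case_nat 0 g)) = case_nat r g"
    using assms by (auto simp: gen_low_def intro!: ext split: nat.splits)
  then show ?case using assms unfolding test_seq_0 by (subst gen_act_rec) auto
next
  case (Suc q)
  have m: "\<not> Suc q * (p - 1) + r < p - 1" "Suc q * (p - 1) + r - (p - 1) = q * (p - 1) + r"
    using assms by auto
  have "gen_act p (Suc q * (p - 1) + r) (test_seq p (Suc q) r (case_nat 0 g)) = case_nat (p - 1) (gen_act p (q * (p - 1) + r) (test_seq p q r (case_nat 0 g)))"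
    unfolding test_seq_Suc using assms m by (subst gen_act_rec) auto
  then show ?case using Suc.IH test_seq_Suc by simp
qed

lemma pos_act_test_seq_fixed:
  assumes "p \<ge> 2" "r < p - 1" "\<forall>a\<in>set W. q * (p - 1) + r < a"
  shows "pos_act p W (test_seq p q r b) = test_seq p q r b"
  using assms(3) by (induction W) (auto simp: gen_act_test_seq_fixed[OF assms(1,2)])

lemma pos_act_test_seq_count:
  assumes "p \<ge> 2" "r < p - 1" "mu = q * (p - 1) + r"
  shows "\<forall>a\<in>set W. mu \<le> a \<Longrightarrow> pos_act p W (test_seq p q r (zero_prefix (count_list W mu) b)) = test_seq p q r b"
proof (induction "length W" arbitrary: W b rule: less_induct)
  case less
  show ?case
  proof (cases "mu \<in> set W")
    case False
    have "\<forall>a\<in>set W. q * (p - 1) + r < a"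
      using less.prems assms(3) False by (metis le_neq_implies_less)
    then show ?thesis using pos_act_test_seq_fixed[OF assms(1,2)] False by (simp add: zero_prefix_0)
  next
    case True
    then obtain A B where W: "W = A @ mu # B" "mu \<notin> set A" by (meson split_list_first)
    have A: "\<forall>a\<in>set A. mu < a"
      using W less.prems by (metis Un_iff le_neq_implies_less set_append)
    define W1 where "W1 = map (\<lambda>a. a + (p - 1)) A @ B"
    have c1: "count_list (map (\<lambda>a. a + (p - 1)) A) mu = 0"
      using A by (auto simp: count_list_0_iff)
    have cnt: "count_list W mu = Suc (count_list W1 mu)" using W c1 unfolding W1_def by simp
    have len: "length W1 < length W" using W unfolding W1_def by simp
    have ge: "\<forall>a\<in>set W1. mu \<le> a" using A less.prems W unfolding W1_def by auto
    have "pos_act p W (test_seq p q r (zero_prefix (count_list W mu) b)) = pos_act p W1 (gen_act p mu (test_seq p q r (case_nat 0 (zero_prefix (count_list W1 mu) b))))"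
    proof -
      have pe: "pos_act p W x = pos_act p W1 (gen_act p mu x)" for x unfolding W1_def W(1)
        using pos_act_extract_min[OF assms(1) A] .
      show ?thesis unfolding pe cnt zero_prefix_Suc ..
    qed
    also have "\<dots> = pos_act p W1 (test_seq p q r (zero_prefix (count_list W1 mu) b))"
      using gen_act_test_seq_zero[OF assms(1,2)] assms(3) by simp
    also have "\<dots> = test_seq p q r b" using less.hyps[OF len ge] .
    finally show ?thesis .
  qed
qed

(* Index lists of positive words that are irreducible for the second rewriting system. *)
fun ra_normal :: "nat \<Rightarrow> nat list \<Rightarrow> bool" where
  "ra_normal p (a # b # W) = (b \<le> a + (p - 1) \<and> ra_normal p (b # W))"
| "ra_normal p _ = True"

lemma ra_normal_split: "ra_normal p (xs @ y # ys) \<longleftrightarrow> ra_normal p (xs @ [y]) \<and> ra_normal p (y # ys)"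
proof (induction xs)
  case (Cons x xs)
  then show ?case by (cases xs) auto
qed simp

lemma ra_normal_map_add: "ra_normal p (map (\<lambda>a. a + c) W) = ra_normal p W"
  by (induction p W rule: ra_normal.induct) auto

lemma ra_normal_tl: "ra_normal p (a # W) \<Longrightarrow> ra_normal p W"
  by (cases W) auto

lemma ra_normal_butlast: "ra_normal p (xs @ [y]) \<Longrightarrow> ra_normal p xs"
proof (induction xs rule: rev_induct)
  case (snoc x xs)
  then show ?case using ra_normal_split[of p xs x "[y]"] by simp
qed simp

lemma ra_normal_iff: "ra_normal p W \<longleftrightarrow> (\<forall>xs a b ys. W = xs @ [a, b] @ ys \<longrightarrow> b \<le> a + (p - 1))"
proof (induction p W rule: ra_normal.induct)
  case (1 p a b W)
  have "(\<forall>xs a' b' ys. a # b # W = xs @ [a', b'] @ ys \<longrightarrow> b' \<le> a' + (p - 1)) \<longleftrightarrow>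
      b \<le> a + (p - 1) \<and> (\<forall>xs a' b' ys. b # W = xs @ [a', b'] @ ys \<longrightarrow> b' \<le> a' + (p - 1))"
    by (auto simp: Cons_eq_append_conv) (metis append_Cons)+
  then show ?case using 1 by simp
qed (auto simp: Cons_eq_append_conv)

lemma ra_normal_extract_min:
  assumes "ra_normal p (A @ mu # B)" "\<forall>a\<in>set A. mu < a"
  shows "ra_normal p (map (\<lambda>a. a + (p - 1)) A @ B)"
proof -
  have h1: "ra_normal p (A @ [mu])" and h2: "ra_normal p (mu # B)"
    using assms(1) ra_normal_split[of p A mu B] by auto
  show ?thesis
  proof (cases "A = []")
    case True then show ?thesis using ra_normal_tl[OF h2] by simp
  next
    case False
    then obtain A' x where A: "A = A' @ [x]" by (metis rev_exhaust)
    have hA: "ra_normal p (A' @ [x])" using ra_normal_butlast[OF h1[unfolded A]] by simp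
    have mA: "ra_normal p (map (\<lambda>a. a + (p - 1)) A' @ [x + (p - 1)])"
      using hA ra_normal_map_add[of p "p - 1" "A' @ [x]"] by simp
    have x: "mu < x" using assms(2) A by simp
    have tl: "ra_normal p ((x + (p - 1)) # B)"
    proof (cases B)
      case Nil then show ?thesis by simp
    next
      case (Cons y B')
      then show ?thesis using h2 x by auto
    qed
    show ?thesis unfolding A
      using ra_normal_split[of p "map (\<lambda>a. a + (p - 1)) A'" "x + (p - 1)" B] mA tl by simp
  qed
qed

lemma extract_min_recover:
  assumes "p \<ge> 2" "ra_normal p (A @ mu # B)" "\<forall>a\<in>set A. mu < a"
  shows "takeWhile (\<lambda>a. mu + p \<le> a) (map (\<lambda>a. a + (p - 1)) A @ B) = map (\<lambda>a. a + (p - 1)) A"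
    "dropWhile (\<lambda>a. mu + p \<le> a) (map (\<lambda>a. a + (p - 1)) A @ B) = B"
proof -
  have h2: "ra_normal p (mu # B)" using assms(2) ra_normal_split[of p A mu B] by auto
  have all: "\<forall>a\<in>set (map (\<lambda>a. a + (p - 1)) A). mu + p \<le> a"
    using assms(1,3) by auto
  have "B = [] \<or> (\<exists>y B'. B = y # B' \<and> y \<le> mu + (p - 1))"
    using h2 by (cases B) auto
  then have nb: "takeWhile (\<lambda>a. mu + p \<le> a) B = []" "dropWhile (\<lambda>a. mu + p \<le> a) B = B"
    using assms(1) by auto
  show "takeWhile (\<lambda>a. mu + p \<le> a) (map (\<lambda>a. a + (p - 1)) A @ B) = map (\<lambda>a. a + (p - 1)) A"
    using takeWhile_append2[of "map (\<lambda>a. a + (p - 1)) A" "\<lambda>a. mu + p \<le> a" B] all nb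
      by simp
  show "dropWhile (\<lambda>a. mu + p \<le> a) (map (\<lambda>a. a + (p - 1)) A @ B) = B"
    using dropWhile_append2[of "map (\<lambda>a. a + (p - 1)) A" "\<lambda>a. mu + p \<le> a" B] all nb
      by simp
qed

lemma extract_min_inj:
  assumes "p \<ge> 2" "ra_normal p (A @ mu # B)" "\<forall>a\<in>set A. mu < a"
    and "ra_normal p (A' @ mu # B')" "\<forall>a\<in>set A'. mu < a"
    and "map (\<lambda>a. a + (p - 1)) A @ B = map (\<lambda>a. a + (p - 1)) A' @ B'"
  shows "A = A'" "B = B'"
proof -
  have "map (\<lambda>a. a + (p - 1)) A = takeWhile (\<lambda>a. mu + p \<le> a) (map (\<lambda>a. a + (p - 1)) A @ B)"
    using extract_min_recover(1)[OF assms(1-3)] by simp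
  also have "\<dots> = map (\<lambda>a. a + (p - 1)) A'"
    unfolding assms(6) using extract_min_recover(1)[OF assms(1,4,5)] .
  finally have "map (\<lambda>a. a + (p - 1)) A = map (\<lambda>a. a + (p - 1)) A'" .
  moreover have "inj (\<lambda>a :: nat. a + (p - 1))"
    by (simp add: inj_def)
  ultimately show "A = A'" by simp
  have "B = dropWhile (\<lambda>a. mu + p \<le> a) (map (\<lambda>a. a + (p - 1)) A @ B)"
    using extract_min_recover(2)[OF assms(1-3)] by simp
  also have "\<dots> = B'"
    unfolding assms(6) using extract_min_recover(2)[OF assms(1,4,5)] .
  finally show "B = B'" .
qed

definition unit_seq :: "nat \<Rightarrow> nat" where "unit_seq = (\<lambda>n. if n = 0 then 1 else 0)"

lemma pos_act_separates:
  assumes "p \<ge> 2" "W \<noteq> []" "\<forall>a\<in>set W'. Min (set W) < a"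
  shows "\<exists>s\<in>digit_seqs p. pos_act p W s \<noteq> pos_act p W' s"
proof -
  define mu where "mu = Min (set W)"
  define q where "q = mu div (p - 1)"
  define r where "r = mu mod (p - 1)"
  have mu: "mu = q * (p - 1) + r" unfolding q_def r_def using div_mult_mod_eq[of mu "p - 1"] by simp
  have r: "r < p - 1" unfolding r_def using assms(1) by simp
  have inW: "mu \<in> set W" unfolding mu_def using assms(2) by simp
  have ge: "\<forall>a\<in>set W. mu \<le> a" unfolding mu_def by simp
  define c where "c = count_list W mu"
  have c: "c > 0" unfolding c_def using inW count_list_0_iff by fastforce
  define x where "x = test_seq p q r (zero_prefix c unit_seq)"
  have xV: "x \<in> digit_seqs p" unfolding x_def digit_seqs_def test_seq_def zero_prefix_def unit_seq_def
    using assms(1) r by auto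
  have "pos_act p W x = test_seq p q r unit_seq" unfolding x_def c_def
    using pos_act_test_seq_count[OF assms(1) r mu ge] .
  moreover have "pos_act p W' x = x" unfolding x_def
    using pos_act_test_seq_fixed[OF assms(1) r] assms(3) mu mu_def by simp
  moreover have "x \<noteq> test_seq p q r unit_seq"
  proof
    assume "x = test_seq p q r unit_seq"
    then have "x (Suc q) = test_seq p q r unit_seq (Suc q)" by simp
    then show False unfolding x_def test_seq_def zero_prefix_def unit_seq_def using c by simp
  qed
  ultimately show ?thesis using xV by metis
qed

lemma split_list_Min:
  fixes W :: "'a :: linorder list"
  assumes "W \<noteq> []"
  obtains A B where "W = A @ Min (set W) # B" "\<forall>a\<in>set A. Min (set W) < a"
proof -
  define mu where "mu = Min (set W)"
  have "mu \<in> set W"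
    using assms by (simp add: mu_def)
  then obtain A B where W: "W = A @ mu # B" "mu \<notin> set A"
    using split_list_first by fastforce
  have "set A \<subseteq> set W"
    using W(1) by auto
  then have "\<forall>a\<in>set A. mu \<le> a"
    unfolding mu_def by auto
  then have "\<forall>a\<in>set A. mu < a"
    using W(2) by (auto simp: order.strict_iff_order)
  with W(1) show ?thesis
    unfolding mu_def by (rule that)
qed

lemma pos_act_eq_Min_eq:
  assumes "p \<ge> 2" "W \<noteq> []" "W' \<noteq> []" "\<forall>s\<in>digit_seqs p. pos_act p W s = pos_act p W' s"
  shows "Min (set W) = Min (set W')"
proof (rule linorder_cases[of "Min (set W)" "Min (set W')"])
  assume less: "Min (set W) < Min (set W')"
  have "\<forall>a\<in>set W'. Min (set W) < a"
    using less_le_trans[OF less Min_le[OF List.finite_set]] by blast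
  with pos_act_separates[OF assms(1,2)] assms(4) show ?thesis
    by blast
next
  assume less: "Min (set W') < Min (set W)"
  have "\<forall>a\<in>set W. Min (set W') < a"
    using less_le_trans[OF less Min_le[OF List.finite_set]] by blast
  with pos_act_separates[OF assms(1,3)] assms(4) show ?thesis
    by metis
qed

lemma pos_act_cancel_min:
  assumes "p \<ge> 2" "\<forall>a\<in>set A. mu < a" "\<forall>a\<in>set A'. mu < a"
    and "\<forall>s\<in>digit_seqs p. pos_act p (A @ mu # B) s = pos_act p (A' @ mu # B') s"
  shows "\<forall>t\<in>digit_seqs p. pos_act p (map (\<lambda>a. a + (p - 1)) A @ B) t
                         = pos_act p (map (\<lambda>a. a + (p - 1)) A' @ B') t"
proof
  fix t assume t: "t \<in> digit_seqs p"
  define s where "s = gen_inv_act p mu t"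
  have "s \<in> digit_seqs p" and ts: "t = gen_act p mu s"
    unfolding s_def
      using gen_inv_act_digit_seqs[OF assms(1) t] gen_act_gen_inv_act[OF assms(1) t] by auto
  then have "pos_act p (A @ mu # B) s = pos_act p (A' @ mu # B') s"
    using assms(4) by blast
  then show "pos_act p (map (\<lambda>a. a + (p - 1)) A @ B) t = pos_act p (map (\<lambda>a. a + (p - 1)) A' @ B') t"
    unfolding ts pos_act_extract_min[OF assms(1,2)] pos_act_extract_min[OF assms(1,3)] .
qed

lemma pos_act_trivial:
  assumes "p \<ge> 2" "\<forall>s\<in>digit_seqs p. pos_act p W s = s"
  shows "W = []"
proof (rule ccontr)
  assume "W \<noteq> []"
  then obtain s where "s \<in> digit_seqs p" "pos_act p W s \<noteq> pos_act p [] s"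
    using pos_act_separates[OF assms(1), of W "[]"] by auto
  with assms(2) show False by simp
qed

lemma pos_act_eq_Nil:
  assumes "p \<ge> 2" "W = [] \<or> W' = []" "\<forall>s\<in>digit_seqs p. pos_act p W s = pos_act p W' s"
  shows "W = W'"
  using assms(2)
proof
  assume "W = []"
  then have "\<forall>s\<in>digit_seqs p. pos_act p W' s = s"
    using assms(3) by (metis pos_act.simps(1))
  then show ?thesis
    using \<open>W = []\<close> pos_act_trivial[OF assms(1)] by metis
next
  assume "W' = []"
  then have "\<forall>s\<in>digit_seqs p. pos_act p W s = s"
    using assms(3) by simp
  then show ?thesis
    using \<open>W' = []\<close> pos_act_trivial[OF assms(1)] by metis
qed

lemma pos_act_injective:
  assumes "p \<ge> 2" "ra_normal p W" "ra_normal p W'"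
    and "\<forall>s\<in>digit_seqs p. pos_act p W s = pos_act p W' s"
  shows "W = W'"
  using assms(2-4)
proof (induction "length W" arbitrary: W W' rule: less_induct)
  case less
  show ?case
  proof (cases "W = [] \<or> W' = []")
    case True
    then show ?thesis
      using pos_act_eq_Nil[OF assms(1)] less.prems(3) by blast
  next
    case False
    then have ne: "W \<noteq> []" "W' \<noteq> []" by auto
    define mu where "mu = Min (set W)"
    have mu': "Min (set W') = mu"
      using pos_act_eq_Min_eq[OF assms(1) ne less.prems(3)] unfolding mu_def by simp
    obtain A B where W: "W = A @ mu # B" and A: "\<forall>a\<in>set A. mu < a"
      using ne(1) unfolding mu_def by (rule split_list_Min)
    obtain A' B' where W': "W' = A' @ mu # B'" and A': "\<forall>a\<in>set A'. mu < a"
      using ne(2) unfolding mu'[symmetric] by (rule split_list_Min)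
    have normal: "ra_normal p (A @ mu # B)" "ra_normal p (A' @ mu # B')"
      using less.prems(1,2) unfolding W W' .
    have "map (\<lambda>a. a + (p - 1)) A @ B = map (\<lambda>a. a + (p - 1)) A' @ B'"
    proof (rule less.hyps)
      show "length (map (\<lambda>a. a + (p - 1)) A @ B) < length W"
        unfolding W by simp
      show "ra_normal p (map (\<lambda>a. a + (p - 1)) A @ B)" "ra_normal p (map (\<lambda>a. a + (p - 1)) A' @ B')"
        by (rule ra_normal_extract_min[OF normal(1) A], rule ra_normal_extract_min[OF normal(2) A'])
      show "\<forall>s\<in>digit_seqs p. pos_act p (map (\<lambda>a. a + (p - 1)) A @ B) s
                            = pos_act p (map (\<lambda>a. a + (p - 1)) A' @ B') s"
        using less.prems(3) unfolding W W' by (rule pos_act_cancel_min[OF assms(1) A A'])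
    qed
    then show ?thesis
      using extract_min_inj[OF assms(1) normal(1) A normal(2) A'] unfolding W W' by simp
  qed
qed

section \<open>Index bounds for the second rewriting system\<close>

(* A step of the second rewriting system on a positive word of (index, origin) pairs; on the
   negative part it is this relation on the reversed list. *)
inductive pos_swap :: "nat \<Rightarrow> (nat \<times> nat) list \<Rightarrow> (nat \<times> nat) list \<Rightarrow> bool" for p where
  pos_swapI: "a + (p - 1) < b \<Longrightarrow> pos_swap p (xs @ [(a, r1), (b, r2)] @ ys) (xs @ [(b - (p - 1), r2), (a, r1)] @ ys)"

definition lift_above :: "nat \<Rightarrow> nat \<Rightarrow> (nat \<Rightarrow> nat) \<Rightarrow> (nat \<Rightarrow> nat)" where
  "lift_above p c L = (\<lambda>k. if k \<le> c then L k else L (k + (p - 1)))"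

fun lift_map :: "nat \<Rightarrow> (nat \<times> nat) list \<Rightarrow> (nat \<Rightarrow> nat) \<Rightarrow> (nat \<Rightarrow> nat)" where
  "lift_map p [] L = L"
| "lift_map p (x # w) L = lift_above p (fst x) (lift_map p w L)"

(* The index each letter acquires when it is pushed to the right end of the word by the relations
   x_b x_a = x_a x_(b+p-1). Swaps permute these values. *)
fun lifted :: "nat \<Rightarrow> (nat \<times> nat) list \<Rightarrow> (nat \<Rightarrow> nat) \<Rightarrow> (nat \<times> nat) list" where
  "lifted p [] L = []"
| "lifted p (x # w) L = (lift_map p w L (fst x), snd x) # lifted p w L"

lemma lift_map_append: "lift_map p (xs @ ys) L = lift_map p xs (lift_map p ys L)"
  by (induction xs) auto
lemma lifted_append: "lifted p (xs @ ys) L = lifted p xs (lift_map p ys L) @ lifted p ys L"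
  by (induction xs) (auto simp: lift_map_append)

lemma lift_map_id_bounds: "k \<le> lift_map p w (\<lambda>k. k) k \<and> lift_map p w (\<lambda>k. k) k \<le> k + (p - 1) * length w"
proof (induction w arbitrary: k)
  case (Cons x w)
  show ?case
  proof (cases "k \<le> fst x")
    case True then show ?thesis using Cons[of k] by (simp add: lift_above_def)
  next
    case False
    have "(p - 1) + (p - 1) * length w = (p - 1) * length (x # w)" by simp
    then show ?thesis using Cons[of "k + (p - 1)"] False by (simp add: lift_above_def)
  qed
qed simp

lemma lifted_upper: "x \<in> set w \<Longrightarrow> \<exists>lo. (lo, snd x) \<in> set (lifted p w (\<lambda>k. k)) \<and> fst x \<le> lo \<and> lo \<le> fst x + (p - 1) * (length w - 1)"
proof (induction w)
  case (Cons y w)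
  show ?case
  proof (cases "x = y")
    case True
    then show ?thesis using lift_map_id_bounds[of "fst y" p w] by auto
  next
    case False
    then have "x \<in> set w" using Cons by simp
    then obtain lo where "(lo, snd x) \<in> set (lifted p w (\<lambda>k. k))" "fst x \<le> lo" "lo \<le> fst x + (p - 1) * (length w - 1)"
      using Cons by blast
    moreover have "(p - 1) * (length w - 1) \<le> (p - 1) * (length (y # w) - 1)" by simp
    ultimately have "(lo, snd x) \<in> set (lifted p (y # w) (\<lambda>k. k))" "fst x \<le> lo" "lo \<le> fst x + (p - 1) * (length (y # w) - 1)"
      by (auto intro: le_trans)
    then show ?thesis by blast
  qed
qed simp

lemma lifted_lower: "(lo, r) \<in> set (lifted p w (\<lambda>k. k)) \<Longrightarrow> \<exists>c. (c, r) \<in> set w \<and> c \<le> lo"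
proof (induction w)
  case (Cons y w)
  show ?case
  proof (cases "(lo, r) = (lift_map p w (\<lambda>k. k) (fst y), snd y)")
    case True
    then show ?thesis using lift_map_id_bounds[of "fst y" p w] by (cases y) auto
  next
    case False
    then have "(lo, r) \<in> set (lifted p w (\<lambda>k. k))" using Cons.prems by auto
    then show ?thesis using Cons.IH by auto
  qed
qed simp

lemma pos_swap_lift:
  assumes "a + (p - 1) < b"
  shows "lift_map p [(b - (p - 1), r2), (a, r1)] L = lift_map p [(a, r1), (b, r2)] L"
    "set (lifted p [(b - (p - 1), r2), (a, r1)] L) = set (lifted p [(a, r1), (b, r2)] L)"
  using assms by (auto simp: lift_above_def intro!: ext)

lemma pos_swap_lift_values:
  assumes "a + (p - 1) < b"
  shows "lift_above p a L (b - (p - 1)) = L b" "lift_above p b L a = L a"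
  using assms by (auto simp: lift_above_def)

lemma pos_swap_invariants:
  assumes "pos_swap p A B"
  shows "length B = length A \<and> (\<forall>y\<in>set B. \<exists>z\<in>set A. snd z = snd y \<and> fst y \<le> fst z) \<and>
    set (lifted p B (\<lambda>k. k)) = set (lifted p A (\<lambda>k. k))"
  using assms
proof cases
  case (pos_swapI a b xs r1 r2 ys)
  have 1: "length B = length A" using pos_swapI by simp
  have 2: "\<forall>y\<in>set B. \<exists>z\<in>set A. snd z = snd y \<and> fst y \<le> fst z"
    using pos_swapI by auto
  have 3: "set (lifted p B (\<lambda>k. k)) = set (lifted p A (\<lambda>k. k))"
    using pos_swapI pos_swap_lift[OF pos_swapI(3), of r2 r1 "lift_map p ys (\<lambda>k. k)"] pos_swap_lift_values[OF pos_swapI(3)]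
    by (simp add: lifted_append lift_map_append insert_commute)
  show ?thesis using 1 2 3 by blast
qed

lemmas pos_swap_invariant = pos_swap_invariants[THEN conjunct1] pos_swap_invariants[THEN conjunct2, THEN conjunct1]
  pos_swap_invariants[THEN conjunct2, THEN conjunct2]

lemma pos_swaps_invariants:
  assumes "(pos_swap p)\<^sup>*\<^sup>* A B"
  shows "length B = length A \<and> (\<forall>y\<in>set B. \<exists>z\<in>set A. snd z = snd y \<and> fst y \<le> fst z)
    \<and> set (lifted p B (\<lambda>k. k)) = set (lifted p A (\<lambda>k. k))"
  using assms
proof (induction rule: rtranclp_induct)
  case (step B C)
  have "length C = length A" using pos_swap_invariant(1)[OF step(2)] step(3) by simp
  moreover have "\<forall>y\<in>set C. \<exists>z\<in>set A. snd z = snd y \<and> fst y \<le> fst z"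
  proof
    fix y assume "y \<in> set C"
    then obtain z where z: "z \<in> set B" "snd z = snd y" "fst y \<le> fst z"
      using pos_swap_invariant(2)[OF step(2)] by blast
    then obtain z' where "z' \<in> set A" "snd z' = snd z" "fst z \<le> fst z'"
      using step(3) by blast
    then show "\<exists>z\<in>set A. snd z = snd y \<and> fst y \<le> fst z"
      using z by (metis le_trans)
  qed
  moreover have "set (lifted p C (\<lambda>k. k)) = set (lifted p A (\<lambda>k. k))"
    using pos_swap_invariant(3)[OF step(2)] step(3) by simp
  ultimately show ?case by blast
qed auto

lemma pos_swaps_index_bounds:
  assumes "(pos_swap p)\<^sup>*\<^sup>* A B" "y \<in> set B"
  shows "\<exists>z\<in>set A. snd z = snd y \<and> fst y \<le> fst z"
    "\<exists>z\<in>set A. snd z = snd y \<and> fst z \<le> fst y + (p - 1) * (length B - 1)"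
proof -
  show "\<exists>z\<in>set A. snd z = snd y \<and> fst y \<le> fst z"
    using pos_swaps_invariants[OF assms(1)] assms(2) by blast
  obtain lo where lo: "(lo, snd y) \<in> set (lifted p B (\<lambda>k. k))" "fst y \<le> lo" "lo \<le> fst y + (p - 1) * (length B - 1)"
    using lifted_upper[OF assms(2)] by blast
  then have "(lo, snd y) \<in> set (lifted p A (\<lambda>k. k))"
    using pos_swaps_invariants[OF assms(1)] by simp
  then obtain c where "(c, snd y) \<in> set A" "c \<le> lo" using lifted_lower by blast
  then show "\<exists>z\<in>set A. snd z = snd y \<and> fst z \<le> fst y + (p - 1) * (length B - 1)"
    using lo(3)
    by (intro bexI[of _ "(c, snd y)"]) auto
qed

abbreviation lsign :: "tletter \<Rightarrow> int" where "lsign z \<equiv> fst (snd z)"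
abbreviation origin :: "tletter \<Rightarrow> nat" where "origin z \<equiv> snd (snd z)"

definition pos_part :: "tletter list \<Rightarrow> (nat \<times> nat) list" where
  "pos_part w = map (\<lambda>z. (fst z, origin z)) (filter (\<lambda>z. lsign z = 1) w)"
definition neg_part :: "tletter list \<Rightarrow> (nat \<times> nat) list" where
  "neg_part w = map (\<lambda>z. (fst z, origin z)) (filter (\<lambda>z. lsign z = -1) w)"
definition pos_embed :: "(nat \<times> nat) list \<Rightarrow> tletter list" where
  "pos_embed P = map (\<lambda>x. (fst x, 1, snd x)) P"
definition neg_embed :: "(nat \<times> nat) list \<Rightarrow> tletter list" where
  "neg_embed P = map (\<lambda>x. (fst x, -1, snd x)) P"

lemma ra_step_parts:
  assumes "p \<ge> 2" "ra_step p u v"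
  shows "(pos_swap p)\<^sup>*\<^sup>* (pos_part u) (pos_part v) \<and> (pos_swap p)\<^sup>*\<^sup>* (rev (neg_part u)) (rev (neg_part v)) \<and> map lsign v = map lsign u"
  using assms(2)
proof cases
  case (ra_pos xs a r1 b r2 ys)
  have lt: "a + (p - 1) < b" and e: "Suc (b - p) = b - (p - Suc 0)" using ra_pos(4) assms(1) by auto
  have "pos_swap p (pos_part u) (pos_part v)" unfolding ra_pos pos_part_def
    using pos_swapI[OF lt, of "pos_part xs" r1 r2 "pos_part ys"]
    by (simp add: pos_part_def e)
  moreover have "neg_part v = neg_part u" unfolding ra_pos neg_part_def by simp
  ultimately show ?thesis using ra_pos by auto
next
  case (ra_neg xs a r1 b r2 ys)
  have lt: "b + (p - 1) < a" and e: "Suc (a - p) = a - (p - Suc 0)" using ra_neg(4) assms(1) by auto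
  have "pos_swap p (rev (neg_part u)) (rev (neg_part v))" unfolding ra_neg neg_part_def
    using pos_swapI[OF lt, of "rev (neg_part ys)" r2 r1 "rev (neg_part xs)"]
      by (simp add: neg_part_def e)
  moreover have "pos_part v = pos_part u" unfolding ra_neg pos_part_def by simp
  ultimately show ?thesis using ra_neg by auto
qed

lemma ra_steps_parts:
  assumes "p \<ge> 2" "(ra_step p)\<^sup>*\<^sup>* u v"
  shows "(pos_swap p)\<^sup>*\<^sup>* (pos_part u) (pos_part v) \<and> (pos_swap p)\<^sup>*\<^sup>* (rev (neg_part u)) (rev (neg_part v)) \<and> map lsign v = map lsign u
    \<and> (\<forall>s\<in>digit_seqs p. word_act p (strip v) s = word_act p (strip u) s)"
  using assms(2)
proof (induction rule: rtranclp_induct)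
  case (step v w)
  have o: "(pos_swap p)\<^sup>*\<^sup>* (pos_part v) (pos_part w) \<and> (pos_swap p)\<^sup>*\<^sup>* (rev (neg_part v)) (rev (neg_part w)) \<and> map lsign w = map lsign v"
    using ra_step_parts[OF assms(1) step(2)] .
  have a: "\<forall>s\<in>digit_seqs p. word_act p (strip w) s = word_act p (strip v) s"
    using ra_step_word_act[OF assms(1) step(2)] by simp
  show ?case
  proof (intro conjI)
    show "(pos_swap p)\<^sup>*\<^sup>* (pos_part u) (pos_part w)"
      using step(3) o by (meson rtranclp_trans)
    show "(pos_swap p)\<^sup>*\<^sup>* (rev (neg_part u)) (rev (neg_part w))"
      using step(3) o by (meson rtranclp_trans)
    show "map lsign w = map lsign u" using step(3) o by simp
    show "\<forall>s\<in>digit_seqs p. word_act p (strip w) s = word_act p (strip u) s"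
      using step(3) a by simp
  qed
qed auto

lemma signs_sorted_split: "map lsign w = replicate k 1 @ replicate l (-1) \<Longrightarrow> w = pos_embed (pos_part w) @ neg_embed (neg_part w)"
proof (induction w arbitrary: k)
  case Nil then show ?case by (simp add: pos_embed_def neg_embed_def pos_part_def neg_part_def)
next
  case (Cons z w)
  show ?case
  proof (cases k)
    case 0
    then have all: "\<forall>x\<in>set (z # w). lsign x = -1" using Cons.prems
      by (metis in_set_replicate list.set_map image_eqI self_append_conv2 replicate_0)
    then have "filter (\<lambda>z. lsign z = 1) (z # w) = []" by (induction w) auto
    moreover have "filter (\<lambda>z. lsign z = -1) (z # w) = z # w" using all by simp
    moreover have "map (\<lambda>x. (fst x, -1, snd x)) (map (\<lambda>z. (fst z, origin z)) (z # w)) = z # w"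
    proof -
      have "map (\<lambda>x. (fst x, -1, snd x)) (map (\<lambda>z. (fst z, origin z)) L) = L" if "\<forall>x\<in>set L. lsign x = -1" for L :: "tletter list"
        using that by (induction L) (auto simp: prod_eq_iff)
      then show ?thesis using all by blast
    qed
    ultimately show ?thesis
      by (simp add: pos_embed_def neg_embed_def pos_part_def neg_part_def del: filter.simps list.map)
  next
    case (Suc k')
    then have "lsign z = 1" "map lsign w = replicate k' 1 @ replicate l (-1)"
      using Cons.prems by auto
    then show ?thesis
      using Cons.IH[of k']
        by (cases z) (auto simp: pos_embed_def neg_embed_def pos_part_def neg_part_def)
  qed
qed

lemma signs_sorted_no_descent: "replicate k (1::int) @ replicate l (-1) \<noteq> xs @ [-1, 1] @ ys"
proof
  assume h: "replicate k (1::int) @ replicate l (-1) = xs @ [-1, 1] @ ys"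
  let ?L = "replicate k (1::int) @ replicate l (-1)"
  have "?L ! length xs = -1" "?L ! Suc (length xs) = 1" unfolding h by (simp_all add: nth_append)
  moreover have "length xs < length ?L" "Suc (length xs) < length ?L" unfolding h by simp_all
  ultimately show False by (auto simp: nth_append split: if_splits)
qed

lemma signs_sorted_rs_irreducible:
  assumes "map lsign w = replicate k 1 @ replicate l (-1)"
  shows "rs_irreducible p w"
  unfolding rs_irreducible_def
proof
  assume "\<exists>v. rs_step p w v"
  then obtain v where "rs_step p w v" by blast
  then obtain xs a r1 b r2 ys where "w = xs @ [(a,-1,r1),(b,1,r2)] @ ys" by cases auto
  then have "map lsign w = map lsign xs @ [-1, 1] @ map lsign ys" by simp
  then show False using assms signs_sorted_no_descent by metis
qed

lemma rs_irreducible_Cons: "rs_irreducible p (z # w) \<Longrightarrow> rs_irreducible p w"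
  unfolding rs_irreducible_def
proof (elim contrapos_nn exE)
  fix v assume "rs_step p w v"
  then show "\<exists>v. rs_step p (z # w) v"
    by cases (metis append_Cons rs_step.intros)+
qed

lemma rs_reducible_neg_pos: "\<exists>v. rs_step p ((a, -1, r1) # (b, 1, r2) # w) v"
proof -
  consider "b < a" | "a < b" | "a = b" by linarith
  then show ?thesis
    using rs_gt[of b a p "[]"] rs_lt[of a b p "[]"] rs_eq[of a b p "[]"] by cases auto
qed

lemma rs_irreducible_signs_sorted:
  assumes "rs_irreducible p w" "\<forall>z\<in>set w. lsign z \<in> {1, -1}"
  shows "\<exists>k l. map lsign w = replicate k 1 @ replicate l (-1)"
  using assms
proof (induction w)
  case Nil then show ?case by (metis append_Nil list.simps(8) replicate_0)
next
  case (Cons z w)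
  obtain k l where kl: "map lsign w = replicate k 1 @ replicate l (-1)"
    using Cons rs_irreducible_Cons by auto
  show ?case
  proof (cases "lsign z = 1")
    case True then show ?thesis using kl by (metis list.simps(9) replicate_Suc append_Cons)
  next
    case False
    then have z: "lsign z = -1" using Cons.prems(2) by auto
    show ?thesis
    proof (cases k)
      case 0 then show ?thesis
        using kl z by (metis list.simps(9) replicate_Suc append_Nil replicate_0)
    next
      case (Suc k')
      then obtain y w' where "w = y # w'" "lsign y = 1" using kl by (cases w) auto
      then have "\<exists>v. rs_step p (z # w) v"
        using z rs_reducible_neg_pos by (metis prod.collapse)
      then show ?thesis using Cons.prems(1) unfolding rs_irreducible_def by blast
    qed
  qed
qed

lemma map_fst_eq_append_pair: "map fst P = xs @ [a, b] @ ys \<Longrightarrow> \<exists>P1 r1 r2 P2. P = P1 @ [(a, r1), (b, r2)] @ P2"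
proof (induction xs arbitrary: P)
  case Nil
  then obtain x y P2 where "P = x # y # P2" "fst x = a" "fst y = b"
    by (cases P; cases "tl P") auto
  then show ?case by (metis append_Nil append_Cons prod.collapse)
next
  case (Cons x xs)
  then obtain y P' where P: "P = y # P'" "map fst P' = xs @ [a, b] @ ys" by (cases P) auto
  then obtain P1 r1 r2 P2 where "P' = P1 @ [(a, r1), (b, r2)] @ P2" using Cons.IH by blast
  then show ?case using P by (metis append_Cons)
qed

lemma ra_irreducible_pos_ra_normal:
  assumes "p \<ge> 2" "ra_irreducible p v" "map lsign v = replicate k 1 @ replicate l (-1)"
  shows "ra_normal p (map fst (pos_part v))"
proof -
  have v: "v = pos_embed (pos_part v) @ neg_embed (neg_part v)"
    using signs_sorted_split[OF assms(3)] .
  have irr: "rs_irreducible p v" using signs_sorted_rs_irreducible[OF assms(3)] .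
  show ?thesis unfolding ra_normal_iff
  proof (intro allI impI)
    fix xs a b ys assume h: "map fst (pos_part v) = xs @ [a, b] @ ys"
    show "b \<le> a + (p - 1)"
    proof (rule ccontr)
      assume nb: "\<not> b \<le> a + (p - 1)"
      obtain P1 r1 r2 P2 where P: "pos_part v = P1 @ [(a, r1), (b, r2)] @ P2"
        using map_fst_eq_append_pair[OF h] by blast
      have v2: "v = pos_embed P1 @ [(a, 1, r1), (b, 1, r2)] @ (pos_embed P2 @ neg_embed (neg_part v))"
        using v unfolding P by (simp add: pos_embed_def)
      have "ra_step p v (pos_embed P1 @ [(b - p + 1, 1, r2), (a, 1, r1)] @ (pos_embed P2 @ neg_embed (neg_part v)))"
        using ra_pos[of p "pos_embed P1" a r1 b r2 "pos_embed P2 @ neg_embed (neg_part v)"] irr v2 nb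
          by auto
      then show False using assms(2) unfolding ra_irreducible_def by blast
    qed
  qed
qed

lemma ra_irreducible_neg_ra_normal:
  assumes "p \<ge> 2" "ra_irreducible p v" "map lsign v = replicate k 1 @ replicate l (-1)"
  shows "ra_normal p (rev (map fst (neg_part v)))"
proof -
  have v: "v = pos_embed (pos_part v) @ neg_embed (neg_part v)"
    using signs_sorted_split[OF assms(3)] .
  have irr: "rs_irreducible p v" using signs_sorted_rs_irreducible[OF assms(3)] .
  show ?thesis unfolding ra_normal_iff
  proof (intro allI impI)
    fix xs a b ys assume h: "rev (map fst (neg_part v)) = xs @ [a, b] @ ys"
    then have h2: "map fst (neg_part v) = rev ys @ [b, a] @ rev xs"
      by (metis rev_append rev_rev_ident rev.simps append_Cons append_Nil append.assoc)
    show "b \<le> a + (p - 1)"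
    proof (rule ccontr)
      assume nb: "\<not> b \<le> a + (p - 1)"
      obtain N1 r1 r2 N2 where N: "neg_part v = N1 @ [(b, r1), (a, r2)] @ N2"
        using map_fst_eq_append_pair[OF h2] by blast
      have v2: "v = (pos_embed (pos_part v) @ neg_embed N1) @ [(b, -1, r1), (a, -1, r2)] @ neg_embed N2"
        using v unfolding N by (simp add: neg_embed_def)
      have "ra_step p v ((pos_embed (pos_part v) @ neg_embed N1) @ [(a, -1, r2), (b - p + 1, -1, r1)] @ neg_embed N2)"
        using ra_neg[of p "pos_embed (pos_part v) @ neg_embed N1" b r1 a r2 "neg_embed N2"] irr v2 nb
          by auto
      then show False using assms(2) unfolding ra_irreducible_def by blast
    qed
  qed
qed

section \<open>Index bounds for the first rewriting system\<close>

(* The net number of letters of opposite sign that y has been swapped past: those on the other side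
   of y than in the original word. A step of the first system raises both swapped indices by at
   most p - 1 and both counts by one. *)
definition crossings :: "tletter list \<Rightarrow> tletter \<Rightarrow> tletter list \<Rightarrow> int" where
  "crossings as y bs = (if lsign y = 1
     then int (length (filter (\<lambda>z. lsign z = -1 \<and> origin z < origin y) bs)) - int (length (filter (\<lambda>z. lsign z = -1 \<and> origin y \<le> origin z) as))
     else int (length (filter (\<lambda>z. lsign z = 1 \<and> origin y < origin z) as)) - int (length (filter (\<lambda>z. lsign z = 1 \<and> origin z \<le> origin y) bs)))"

definition drift_bounded :: "nat \<Rightarrow> (nat \<Rightarrow> nat) \<Rightarrow> tletter list \<Rightarrow> bool" where
  "drift_bounded p i u \<longleftrightarrow> (\<forall>as y bs. u = as @ y # bs \<longrightarrow>
     i (origin y) \<le> fst y \<and> int (fst y) - int (i (origin y)) \<le> int (p - 1) * crossings as y bs)"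

lemma append_Cons_eq_pair_cases: "as @ z # bs = XS @ [y', x'] @ YS \<Longrightarrow>
  (\<exists>cs. XS = as @ z # cs \<and> bs = cs @ [y', x'] @ YS) \<or> (as = XS \<and> z = y' \<and> bs = x' # YS) \<or>
  (as = XS @ [y'] \<and> z = x' \<and> bs = YS) \<or> (\<exists>cs. as = XS @ [y', x'] @ cs \<and> YS = cs @ z # bs)"
proof (induction as arbitrary: XS)
  case Nil
  then show ?case by (cases XS) auto
next
  case (Cons a as)
  show ?case
  proof (cases XS)
    case Nil
    then have "as @ z # bs = x' # YS" "a = y'" using Cons.prems by auto
    then show ?thesis using Nil by (cases as) auto
  next
    case (Cons c XS')
    then have "as @ z # bs = XS' @ [y', x'] @ YS" "a = c" using Cons.prems by auto
    then show ?thesis using Cons.IH[of XS'] \<open>XS = c # XS'\<close> by auto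
  qed
qed

lemma drift_bounded_swap:
  assumes "drift_bounded p i u" "u = XS @ [(a, -1, r1), (b, 1, r2)] @ YS"
  "b \<le> b'" "b' \<le> b + (p - 1)" "a \<le> a'" "a' \<le> a + (p - 1)"
  shows "drift_bounded p i (XS @ [(b', 1, r2), (a', -1, r1)] @ YS)"
  unfolding drift_bounded_def
proof (intro allI impI)
  fix as z bs assume h: "XS @ [(b', 1, r2), (a', -1, r1)] @ YS = as @ z # bs"
  have old: "\<And>as z bs. u = as @ z # bs \<Longrightarrow> i (origin z) \<le> fst z \<and> int (fst z) - int (i (origin z)) \<le> int (p - 1) * crossings as z bs"
    using assms(1) unfolding drift_bounded_def by blast
  consider (c1) cs where "XS = as @ z # cs" "bs = cs @ [(b', 1, r2), (a', -1, r1)] @ YS"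
    | (c2) "as = XS" "z = (b', 1, r2)" "bs = (a', -1, r1) # YS"
    | (c3) "as = XS @ [(b', 1, r2)]" "z = (a', -1, r1)" "bs = YS"
    | (c4) cs where "as = XS @ [(b', 1, r2), (a', -1, r1)] @ cs" "YS = cs @ z # bs"
    using append_Cons_eq_pair_cases[OF h[symmetric]] by blast
  then show "i (origin z) \<le> fst z \<and> int (fst z) - int (i (origin z)) \<le> int (p - 1) * crossings as z bs"
  proof cases
    case c1
    have "u = as @ z # (cs @ [(a, -1, r1), (b, 1, r2)] @ YS)" using assms(2) c1 by simp
    note o = old[OF this]
    have "crossings as z (cs @ [(a, -1, r1), (b, 1, r2)] @ YS) = crossings as z bs"
      unfolding c1 crossings_def by simp
    then show ?thesis using o by simp
  next
    case c2
    have "u = (XS @ [(a, -1, r1)]) @ (b, 1, r2) # YS" using assms(2) by simp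
    note o = old[OF this]
    have "crossings as z bs = crossings (XS @ [(a, -1, r1)]) (b, 1, r2) YS + 1"
      unfolding c2 crossings_def by auto
    then show ?thesis using o c2 assms(3,4) by (simp add: algebra_simps)
  next
    case c3
    have "u = XS @ (a, -1, r1) # ((b, 1, r2) # YS)" using assms(2) by simp
    note o = old[OF this]
    have "crossings as z bs = crossings XS (a, -1, r1) ((b, 1, r2) # YS) + 1"
      unfolding c3 crossings_def by auto
    then show ?thesis using o c3 assms(5,6) by (simp add: algebra_simps)
  next
    case c4
    have "u = (XS @ [(a, -1, r1), (b, 1, r2)] @ cs) @ z # bs" using assms(2) c4 by simp
    note o = old[OF this]
    have "crossings (XS @ [(a, -1, r1), (b, 1, r2)] @ cs) z bs = crossings as z bs"
      unfolding c4 crossings_def by simp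
    then show ?thesis using o by simp
  qed
qed

lemma rs_step_drift_bounded:
  assumes "p \<ge> 2" "drift_bounded p i u" "rs_step p u v"
  shows "drift_bounded p i v"
  using assms(3)
proof cases
  case (rs_gt a b xs r1 r2 ys)
  show ?thesis unfolding rs_gt
    using drift_bounded_swap[OF assms(2) rs_gt(1), of b "a + p - 1"] assms(1) by simp
next
  case (rs_lt a b xs r1 r2 ys)
  show ?thesis unfolding rs_lt
    using drift_bounded_swap[OF assms(2) rs_lt(1), of "b + p - 1" a] assms(1) by simp
next
  case (rs_eq a b xs r1 r2 ys)
  show ?thesis unfolding rs_eq using drift_bounded_swap[OF assms(2) rs_eq(1), of b a] rs_eq by simp
qed

lemma upt_eq_append_Cons: "[m..<n] = xs @ l # ys \<Longrightarrow> (\<forall>x\<in>set xs. x < l) \<and> (\<forall>y\<in>set ys. l < y)"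
  using sorted_wrt_upt[of m n] by (simp add: sorted_wrt_append)

lemma drift_bounded_tracked_word: "drift_bounded p i (tracked_word d i eps)"
  unfolding drift_bounded_def
proof (intro allI impI)
  fix as y bs assume h: "tracked_word d i eps = as @ y # bs"
  then obtain L1 l L2 where L: "[1..<d+1] = L1 @ l # L2" "as = map (\<lambda>l. (i l, eps l, l)) L1"
    "y = (i l, eps l, l)" "bs = map (\<lambda>l. (i l, eps l, l)) L2"
    unfolding tracked_word_def by (auto simp: map_eq_append_conv Cons_eq_map_conv)
  have s: "\<forall>x\<in>set L1. x < l" "\<forall>y\<in>set L2. l < y"
    using upt_eq_append_Cons[OF L(1)] by auto
  have z: "\<And>P. filter (\<lambda>x. P x \<and> x < l) L2 = []" "\<And>P. filter (\<lambda>x. P x \<and> x \<le> l) L2 = []"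
    "\<And>P. filter (\<lambda>x. P x \<and> l < x) L1 = []" "\<And>P. filter (\<lambda>x. P x \<and> l \<le> x) L1 = []"
    using s by (auto simp: filter_empty_conv)
  have "crossings as y bs = 0" unfolding crossings_def L(2,3,4) by (simp add: o_def z)
  then show "i (origin y) \<le> fst y \<and> int (fst y) - int (i (origin y)) \<le> int (p - 1) * crossings as y bs"
    using L(3) by simp
qed



section \<open>Normal forms of trivial words\<close>

lemma rs_steps_invariants:
  assumes "p \<ge> 2" "(rs_step p)\<^sup>*\<^sup>* w u" "\<forall>z\<in>set w. lsign z \<in> {1, -1}"
  shows "(\<forall>z\<in>set u. lsign z \<in> {1, -1}) \<and> length u = length w
    \<and> (\<forall>s\<in>digit_seqs p. word_act p (strip u) s = word_act p (strip w) s)"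
  using assms(2)
proof (induction rule: rtranclp_induct)
  case (step u v)
  then have "(\<forall>z\<in>set v. lsign z \<in> {1, -1}) \<and> length v = length u"
    by (auto elim!: rs_step.cases)
  with step show ?case using rs_step_word_act[OF assms(1) step(2)] by simp
qed (use assms in simp)

lemma rs_steps_drift_bounded:
  assumes "p \<ge> 2" "(rs_step p)\<^sup>*\<^sup>* w u" "drift_bounded p i w"
  shows "drift_bounded p i u"
  using assms(2,3)
    by (induction rule: rtranclp_induct) (auto intro: rs_step_drift_bounded[OF assms(1)])

lemma length_filter_conj_le: "length (filter (\<lambda>z. P z \<and> Q z) xs) \<le> length (filter P xs)"
  by (induction xs) auto

lemma drift_bounded_index_bounds:
  assumes "drift_bounded p i u" "y \<in> set u"
  shows "i (origin y) \<le> fst y \<and> fst y \<le> i (origin y) + (p - 1) * (if lsign y = 1 then length (neg_part u) else length (pos_part u))"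
proof -
  obtain as bs where u: "u = as @ y # bs" using split_list[OF assms(2)] by blast
  have o: "i (origin y) \<le> fst y" "int (fst y) - int (i (origin y)) \<le> int (p - 1) * crossings as y bs"
    using assms(1) u unfolding drift_bounded_def by blast+
  define M where "M = (if lsign y = 1 then length (neg_part u) else length (pos_part u))"
  have "crossings as y bs \<le> int M"
  proof (cases "lsign y = 1")
    case True
    have "length (filter (\<lambda>z. lsign z = -1 \<and> origin z < origin y) bs) \<le> length (filter (\<lambda>z. lsign z = -1) bs)"
      by (rule length_filter_conj_le)
    also have "\<dots> \<le> length (neg_part u)" unfolding u neg_part_def by simp
    finally show ?thesis using True unfolding crossings_def M_def by simp
  next
    case False
    have "length (filter (\<lambda>z. lsign z = 1 \<and> origin y < origin z) as) \<le> length (filter (\<lambda>z. lsign z = 1) as)"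
      by (rule length_filter_conj_le)
    also have "\<dots> \<le> length (pos_part u)" unfolding u pos_part_def by simp
    finally show ?thesis using False unfolding crossings_def M_def by simp
  qed
  then have "int (p - 1) * crossings as y bs \<le> int (p - 1) * int M"
    by (simp add: mult_left_mono)
  then have "int (fst y) - int (i (origin y)) \<le> int ((p - 1) * M)" using o(2) by simp
  then show ?thesis using o(1) unfolding M_def by linarith
qed

lemma pos_swaps_drift:
  assumes "(pos_swap p)\<^sup>*\<^sup>* A B" "y \<in> set B" "length B = m"
  "\<forall>z\<in>set A. i (snd z) \<le> fst z \<and> fst z \<le> i (snd z) + (p - 1) * m"
  shows "fst y \<le> i (snd y) + (p - 1) * m \<and> i (snd y) \<le> fst y + (p - 1) * m"
proof -
  obtain z where z: "z \<in> set A" "snd z = snd y" "fst y \<le> fst z"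
    using pos_swaps_index_bounds(1)[OF assms(1,2)] by blast
  obtain z' where z': "z' \<in> set A" "snd z' = snd y" "fst z' \<le> fst y + (p - 1) * (length B - 1)"
    using pos_swaps_index_bounds(2)[OF assms(1,2)] by blast
  have b: "(p - 1) * (length B - 1) \<le> (p - 1) * m" using assms(3) by simp
  have z1: "fst z \<le> i (snd y) + (p - 1) * m" using assms(4) z(1) z(2) by metis
  have z2: "i (snd y) \<le> fst z'" using assms(4) z'(1) z'(2) by metis
  show ?thesis using z(3) z1 z2 z'(3) b by linarith
qed

lemma NF_tracked_shape:
  assumes "p \<ge> 2" "\<forall>z\<in>set w. lsign z \<in> {1, -1}" "NF_tracked p w v"
  shows "v = pos_embed (pos_part v) @ neg_embed (neg_part v)"
    and "ra_normal p (map fst (pos_part v))" and "ra_normal p (rev (map fst (neg_part v)))"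
    and "length v = length w"
    and "\<forall>s\<in>digit_seqs p. word_act p (strip v) s = word_act p (strip w) s"
proof -
  obtain u where rs: "(rs_step p)\<^sup>*\<^sup>* w u" "rs_irreducible p u"
    and ra: "(ra_step p)\<^sup>*\<^sup>* u v" "ra_irreducible p v"
    using assms(3) unfolding NF_tracked_def by blast
  note rs_inv = rs_steps_invariants[OF assms(1) rs(1) assms(2)]
  note ra_inv = ra_steps_parts[OF assms(1) ra(1)]
  obtain k l where "map lsign u = replicate k 1 @ replicate l (-1)"
    using rs_irreducible_signs_sorted[OF rs(2)] rs_inv by blast
  then have sorted: "map lsign v = replicate k 1 @ replicate l (-1)"
    using ra_inv by simp
  show "v = pos_embed (pos_part v) @ neg_embed (neg_part v)"
    using signs_sorted_split[OF sorted] .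
  show "ra_normal p (map fst (pos_part v))"
    by (rule ra_irreducible_pos_ra_normal[OF assms(1) ra(2) sorted])
  show "ra_normal p (rev (map fst (neg_part v)))"
    by (rule ra_irreducible_neg_ra_normal[OF assms(1) ra(2) sorted])
  show "length v = length w"
    using rs_inv ra_inv by (metis length_map)
  show "\<forall>s\<in>digit_seqs p. word_act p (strip v) s = word_act p (strip w) s"
    using rs_inv ra_inv by simp
qed

lemma NF_tracked_drift:
  assumes "p \<ge> 2" "NF_tracked p (tracked_word d i eps) v"
    and "length (pos_part v) = m" "length (neg_part v) = m"
  shows "\<forall>y\<in>set (pos_part v) \<union> set (neg_part v).
    fst y \<le> i (snd y) + (p - 1) * m \<and> i (snd y) \<le> fst y + (p - 1) * m"
proof -
  obtain u where rs: "(rs_step p)\<^sup>*\<^sup>* (tracked_word d i eps) u" and ra: "(ra_step p)\<^sup>*\<^sup>* u v"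
    using assms(2) unfolding NF_tracked_def by blast
  have drift: "drift_bounded p i u"
    using rs_steps_drift_bounded[OF assms(1) rs drift_bounded_tracked_word] .
  have pos: "(pos_swap p)\<^sup>*\<^sup>* (pos_part u) (pos_part v)"
    and neg: "(pos_swap p)\<^sup>*\<^sup>* (rev (neg_part u)) (rev (neg_part v))"
    using ra_steps_parts[OF assms(1) ra] by auto
  have lengths: "length (pos_part u) = m" "length (neg_part u) = m"
    using pos_swaps_invariants[OF pos] pos_swaps_invariants[OF neg] assms(3,4) by auto
  have "i (snd z) \<le> fst z \<and> fst z \<le> i (snd z) + (p - 1) * m"
    if z: "z \<in> set (pos_part u) \<union> set (neg_part u)" for z
  proof -
    obtain y where "y \<in> set u" "z = (fst y, origin y)"
      using z unfolding pos_part_def neg_part_def by auto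
    then show ?thesis
      using drift_bounded_index_bounds[OF drift, of y] lengths by (simp split: if_splits)
  qed
  then show ?thesis
    using pos_swaps_drift[OF pos _ assms(3)] pos_swaps_drift[OF neg _] assms(4) by auto
qed

lemma ra_normal_palindrome:
  assumes "p \<ge> 2" "ra_normal p P" "ra_normal p Q"
    and "\<forall>s\<in>digit_seqs p. word_act p (map (\<lambda>c. (c, 1)) P @ map (\<lambda>c. (c, -1)) (rev Q)) s = s"
  shows "P = Q"
proof -
  have "pos_act p P s = pos_act p Q s" if s: "s \<in> digit_seqs p" for s
  proof -
    have t: "pos_act p P s \<in> digit_seqs p"
      using pos_act_digit_seqs[OF assms(1) s] .
    have "neg_act p (rev Q) (pos_act p P s) = s"
      using assms(4) s by (simp add: word_act_append word_act_pos word_act_neg)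
    then have "pos_act p Q s = pos_act p Q (neg_act p (rev Q) (pos_act p P s))"
      by simp
    also have "\<dots> = pos_act p P s"
      using pos_act_neg_act_rev[OF assms(1) t] .
    finally show ?thesis ..
  qed
  then show ?thesis
    using pos_act_injective[OF assms(1-3)] by blast
qed

lemma NF_tracked_palindromic:
  assumes "p \<ge> 2" "in_W0 p d i eps" "NF_tracked p (tracked_word d i eps) v"
  shows "v = pos_embed (pos_part v) @ neg_embed (neg_part v)"
    and "map fst (neg_part v) = rev (map fst (pos_part v))"
    and "ra_normal p (map fst (pos_part v))"
    and "d = 2 * length (pos_part v)"
    and "\<forall>y\<in>set (pos_part v) \<union> set (neg_part v).
      fst y \<le> i (snd y) + (p - 1) * length (pos_part v) \<and> i (snd y) \<le> fst y + (p - 1) * length (pos_part v)"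
proof -
  have signs: "\<forall>z\<in>set (tracked_word d i eps). lsign z \<in> {1, -1}"
    using assms(2) by (auto simp: in_W0_def tracked_word_def)
  note shape = NF_tracked_shape[OF assms(1) signs assms(3)]
  show v: "v = pos_embed (pos_part v) @ neg_embed (neg_part v)" by (fact shape(1))
  show "ra_normal p (map fst (pos_part v))" by (fact shape(2))
  have "strip (tracked_word d i eps) = word d i eps"
    by (simp add: strip_def tracked_word_def word_def)
  moreover have "fp_equiv p (word d i eps) []"
    using assms(2) by (simp add: in_W0_def)
  ultimately have "\<forall>s\<in>digit_seqs p. word_act p (strip v) s = s"
    using shape(5) fp_equiv_word_act[OF assms(1)] by fastforce
  moreover have "strip v = map (\<lambda>c. (c, 1)) (map fst (pos_part v))
      @ map (\<lambda>c. (c, -1)) (rev (rev (map fst (neg_part v))))"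
    by (subst v) (simp add: strip_def pos_embed_def neg_embed_def)
  ultimately have "map fst (pos_part v) = rev (map fst (neg_part v))"
    using ra_normal_palindrome[OF assms(1) shape(2,3)] by simp
  then show pal: "map fst (neg_part v) = rev (map fst (pos_part v))"
    by simp
  then have len: "length (neg_part v) = length (pos_part v)"
    by (metis length_map length_rev)
  have "length v = length (pos_part v) + length (neg_part v)"
    by (subst v) (simp add: pos_embed_def neg_embed_def)
  moreover have "length (tracked_word d i eps) = d"
    by (simp add: tracked_word_def)
  ultimately show "d = 2 * length (pos_part v)"
    using shape(4) len by simp
  show "\<forall>y\<in>set (pos_part v) \<union> set (neg_part v).
      fst y \<le> i (snd y) + (p - 1) * length (pos_part v) \<and> i (snd y) \<le> fst y + (p - 1) * length (pos_part v)"
    using NF_tracked_drift[OF assms(1,3) refl len] .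
qed

lemma ra_normal_nth:
  "ra_normal p W \<Longrightarrow> Suc k < length W \<Longrightarrow> W ! Suc k \<le> W ! k + (p - 1)"
  by (induction p W arbitrary: k rule: ra_normal.induct) (auto simp: nth_Cons split: nat.splits)

lemma map_nth_pred_upt: "map (\<lambda>l. f (L ! (l - 1))) [1..<length L + 1] = map f L"
proof -
  have "[1..<length L + 1] = map Suc [0..<length L]"
    by (simp add: map_Suc_upt)
  then show ?thesis
    by (simp add: map_nth[of L, symmetric, THEN arg_cong[where f = "map f"]] del: map_nth)
qed

lemma strip_pos_embed_neg_embed:
  assumes "map fst N = rev (map fst P)"
  shows "strip (pos_embed P @ neg_embed N) =
    map (\<lambda>l. (fst (P ! (l - 1)), 1)) [1..<length P + 1]
    @ rev (map (\<lambda>l. (fst (P ! (l - 1)), -1)) [1..<length P + 1])"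
proof -
  have nth: "map (\<lambda>l. (fst (P ! (l - 1)), e)) [1..<length P + 1] = map (\<lambda>c. (c, e)) (map fst P)"
    for e :: int
    using map_nth_pred_upt[of "\<lambda>y. (fst y, e)" P] by simp
  have "strip (neg_embed N) = map (\<lambda>c. (c, -1)) (map fst N)"
    by (simp add: strip_def neg_embed_def)
  also have "\<dots> = rev (map (\<lambda>c. (c, -1)) (map fst P))"
    using assms by (simp add: rev_map)
  finally show ?thesis
    unfolding nth by (simp add: strip_def pos_embed_def)
qed

lemma tau_inv_palindromic:
  assumes "map fst N = rev (map fst P)" "k \<in> {1..length P}"
  shows "tau_inv (pos_embed P @ neg_embed N) k = snd (P ! (k - 1))"
    and "\<exists>y\<in>set N. fst y = fst (P ! (k - 1))
      \<and> tau_inv (pos_embed P @ neg_embed N) (2 * length P - k + 1) = snd y"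
proof -
  have length: "length N = length P"
    using arg_cong[OF assms(1), of length] by simp
  have lt: "k - 1 < length P" "length P - k < length P"
    using assms(2) by auto
  show "tau_inv (pos_embed P @ neg_embed N) k = snd (P ! (k - 1))"
    using lt by (simp add: tau_inv_def pos_embed_def nth_append)
  have "2 * length P - k + 1 - 1 = length (pos_embed P) + (length P - k)"
    using assms(2) by (simp add: pos_embed_def)
  then have "tau_inv (pos_embed P @ neg_embed N) (2 * length P - k + 1) = snd (N ! (length P - k))"
    unfolding tau_inv_def
      using lt length by (simp only: nth_append_length_plus) (simp add: neg_embed_def)
  moreover have "fst (N ! (length P - k)) = rev (map fst P) ! (length P - k)"
    using lt length by (simp flip: assms(1))
  moreover have "N ! (length P - k) \<in> set N"
    using lt length by simp
  ultimately show "\<exists>y\<in>set N. fst y = fst (P ! (k - 1))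
      \<and> tau_inv (pos_embed P @ neg_embed N) (2 * length P - k + 1) = snd y"
    using lt by (auto simp: rev_nth)
qed

lemma int_drift_bound:
  assumes "(a :: nat) \<le> b + (p - 1) * m" "b \<le> a + (p - 1) * m" "p \<ge> 1"
  shows "\<bar>2 * (int a - int b)\<bar> \<le> int (2 * m) * (int p - 1)"
proof -
  have "int ((p - 1) * m) = (int p - 1) * int m"
    using assms(3) by (simp add: of_nat_diff)
  then show ?thesis
    using assms(1,2) by (simp add: abs_le_iff algebra_simps)
qed

lemma palindromic_normal_form:
  assumes "p \<ge> 2" "v = pos_embed P @ neg_embed N" "map fst N = rev (map fst P)"
    and "ra_normal p (map fst P)" "d = 2 * length P"
    and "\<forall>y\<in>set P \<union> set N. fst y \<le> i (snd y) + (p - 1) * length P \<and> i (snd y) \<le> fst y + (p - 1) * length P"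
  defines "j \<equiv> \<lambda>l. fst (P ! (l - 1))"
  shows "strip v = map (\<lambda>l. (j l, 1)) [1..<d div 2 + 1] @ rev (map (\<lambda>l. (j l, -1)) [1..<d div 2 + 1])"
    and "\<forall>l\<in>{1..<d div 2}. j l + p - 1 \<ge> j (l + 1)"
    and "\<forall>l\<in>{1..d div 2}. \<bar>2 * (int (j l) - int (i (tau_inv v l)))\<bar> \<le> int d * (int p - 1)"
    and "\<forall>k\<in>{1..d div 2}. \<bar>int (i (tau_inv v k)) - int (i (tau_inv v (d - k + 1)))\<bar> \<le> int d * (int p - 1)"
proof -
  have half: "d div 2 = length P"
    using assms(5) by simp
  have drift: "\<bar>2 * (int (fst y) - int (i (snd y)))\<bar> \<le> int d * (int p - 1)"
    if "y \<in> set P \<union> set N" for y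
    using assms(1,5,6) that int_drift_bound[of "fst y" "i (snd y)" p "length P"] by auto
  show "strip v = map (\<lambda>l. (j l, 1)) [1..<d div 2 + 1] @ rev (map (\<lambda>l. (j l, -1)) [1..<d div 2 + 1])"
    unfolding assms(2) half j_def using strip_pos_embed_neg_embed[OF assms(3)] .
  show "\<forall>l\<in>{1..<d div 2}. j l + p - 1 \<ge> j (l + 1)"
  proof
    fix l assume l: "l \<in> {1..<d div 2}"
    then have "Suc (l - 1) < length (map fst P)"
      unfolding half by auto
    then have "fst (P ! l) \<le> fst (P ! (l - 1)) + (p - 1)"
      using ra_normal_nth[OF assms(4)] l by fastforce
    then show "j l + p - 1 \<ge> j (l + 1)"
      using assms(1) by (simp add: j_def)
  qed
  have drift_pos: "\<bar>2 * (int (j l) - int (i (tau_inv v l)))\<bar> \<le> int d * (int p - 1)"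
    if "l \<in> {1..d div 2}" for l
    using drift[of "P ! (l - 1)"] tau_inv_palindromic[OF assms(3), of l] that
    unfolding half assms(2) j_def by auto
  then show "\<forall>l\<in>{1..d div 2}. \<bar>2 * (int (j l) - int (i (tau_inv v l)))\<bar> \<le> int d * (int p - 1)" ..
  show "\<forall>k\<in>{1..d div 2}. \<bar>int (i (tau_inv v k)) - int (i (tau_inv v (d - k + 1)))\<bar> \<le> int d * (int p - 1)"
  proof
    fix k assume k: "k \<in> {1..d div 2}"
    then obtain y where "y \<in> set N" "fst y = j k" "tau_inv v (d - k + 1) = snd y"
      using tau_inv_palindromic(2)[OF assms(3), of k] unfolding half assms(2,5) j_def by auto
    then show "\<bar>int (i (tau_inv v k)) - int (i (tau_inv v (d - k + 1)))\<bar> \<le> int d * (int p - 1)"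
      using drift[of y] drift_pos[OF k] by (simp add: abs_le_iff)
  qed
qed

theorem mainTheorem5:
  fixes p d :: nat and i :: "nat \<Rightarrow> nat" and eps :: "nat \<Rightarrow> int"
  assumes "p \<ge> 2"
    and "in_W0 p d i eps"
  shows "even d \<and>
    (\<forall>v. NF_tracked p (tracked_word d i eps) v \<longrightarrow>
      (\<exists>j :: nat \<Rightarrow> nat.
          strip v = map (\<lambda>l. (j l, 1)) [1..<d div 2 + 1]
                    @ rev (map (\<lambda>l. (j l, -1)) [1..<d div 2 + 1])
        \<and> (\<forall>l\<in>{1..<d div 2}. j l + p - 1 \<ge> j (l + 1))
        \<and> (\<forall>l\<in>{1..d div 2}.
              - (int d * (int p - 1)) \<le> 2 * (int (j l) - int (i (tau_inv v l)))
            \<and> 2 * (int (j l) - int (i (tau_inv v l))) \<le> int d * (int p - 1)))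
      \<and> (\<forall>k\<in>{1..d div 2}.
            \<bar>int (i (tau_inv v k)) - int (i (tau_inv v (d - k + 1)))\<bar> \<le> int d * (int p - 1)))"
proof -
  have "even d"
    using assms(2) by (rule in_W0_even_length)
  moreover have "\<exists>j. strip v = map (\<lambda>l. (j l, 1)) [1..<d div 2 + 1] @ rev (map (\<lambda>l. (j l, -1)) [1..<d div 2 + 1])
        \<and> (\<forall>l\<in>{1..<d div 2}. j l + p - 1 \<ge> j (l + 1))
        \<and> (\<forall>l\<in>{1..d div 2}. - (int d * (int p - 1)) \<le> 2 * (int (j l) - int (i (tau_inv v l)))
            \<and> 2 * (int (j l) - int (i (tau_inv v l))) \<le> int d * (int p - 1))"
    and "\<forall>k\<in>{1..d div 2}. \<bar>int (i (tau_inv v k)) - int (i (tau_inv v (d - k + 1)))\<bar> \<le> int d * (int p - 1)"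
    if NF: "NF_tracked p (tracked_word d i eps) v" for v
    using palindromic_normal_form[OF assms(1) NF_tracked_palindromic[OF assms NF]]
    by (fastforce simp: abs_le_iff)+
  ultimately show ?thesis
    by blast
qed

end
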